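(* Let $n\ge1$, $p\ge4$, $\mathbb{T}^n=\mathbb{R}^n/\mathbb{Z}^n$, and let $b\in C^\infty(\mathbb{T}^n\times[0,\infty);\mathbb{R}^n)$ with $\|b\|_{C^k}<\infty$ for all $k$. Let $W_t$ be a standard $n$-dimensional Brownian motion and for $\varepsilon>0$ let $(X^\varepsilon_t,V^\varepsilon_t)$ solve $dX^\varepsilon_t=V^\varepsilon_tdt$, $dV^\varepsilon_t=\frac1\varepsilon(b(X^\varepsilon_t,t)-V^\varepsilon_t)dt+\sqrt{2/\varepsilon}\,dW_t$, with $X^\varepsilon_0=x$ deterministic and $\tilde V^\varepsilon_0:=V^\varepsilon_0-b(x,0)$ satisfying $\mathbf{E}\tilde V^\varepsilon_0=0$, $\mathbf{E}|\tilde V^\varepsilon_0|^p<\infty$. Then there exists a constant $C>0$, depending only on $b$ (and on $p$ and $\mathbf{E}|\tilde V^\varepsilon_0|^p$), such that for all $t\ge0$ $$\mathbf{E}|V^\varepsilon_t|^p\le C .$$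
   Context: For $f$ on $S=\mathbb{T}^n\times[0,\infty)$, $\|f\|_{C^k}=\max_{|\alpha|\le k}\sup_{z\in S}|D^\alpha f(z)|$. $b$ is viewed as $\mathbb{Z}^n$-periodic in $x$ on $\mathbb{R}^n$, positions lifted to $\mathbb{R}^n$. $V^\varepsilon_0$ is measurable with respect to the initial sigma-algebra of the filtration of $W$ (independent of $W$). *)

theory Defs
  imports "HOL-Probability.Probability"
begin

text \<open>b is viewed as a function on R^n x [0,inf), Z^n-periodic in x.\<close>
definition periodic_drift :: "(real^'n \<Rightarrow> real \<Rightarrow> real^'n) \<Rightarrow> bool" where
  "periodic_drift b \<longleftrightarrow>
     (\<forall>x t k. (\<forall>i. k $ i \<in> \<int>) \<longrightarrow> b (x + k) t = b x t)"

text \<open>All iterated partial derivatives (in the n space directions and in time, the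
  latter one-sided at t = 0) of every component of b exist on R^n x [0,inf) and are
  bounded there: F is a family containing the components of b, closed under taking
  partial derivatives, consisting of bounded functions.  This is b in C^infinity with
  finite C^k norm for every k.\<close>
definition smooth_bounded :: "(real^'n \<Rightarrow> real \<Rightarrow> real^'n) \<Rightarrow> bool" where
  "smooth_bounded b \<longleftrightarrow>
     (\<exists>F :: (real^'n \<Rightarrow> real \<Rightarrow> real) set.
        (\<forall>i. (\<lambda>x t. b x t $ i) \<in> F) \<and>
        (\<forall>f\<in>F. \<exists>B. \<forall>x t. 0 \<le> t \<longrightarrow> \<bar>f x t\<bar> \<le> B) \<and>
        (\<forall>f\<in>F.
           (\<forall>j. \<exists>g\<in>F. \<forall>x t. 0 \<le> t \<longrightarrow>
                ((\<lambda>h. f (x + h *\<^sub>R axis j 1) t) has_real_derivative g x t) (at 0)) \<and>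
           (\<exists>g\<in>F. \<forall>x t. 0 \<le> t \<longrightarrow>
                ((\<lambda>h. f x (t + h)) has_real_derivative g x t) (at 0 within {-t..}))))"

definition std_BM :: "'a measure \<Rightarrow> (real \<Rightarrow> 'a \<Rightarrow> real^'n) \<Rightarrow> bool" where
  "std_BM M W \<longleftrightarrow> prob_space M \<and>
     (\<forall>t. W t \<in> borel_measurable M) \<and>
     (AE \<omega> in M. W 0 \<omega> = 0 \<and> continuous_on {0..} (\<lambda>t. W t \<omega>)) \<and>
     (\<forall>s t. 0 \<le> s \<and> s < t \<longrightarrow>
        prob_space.indep_vars M (\<lambda>_. borel) (\<lambda>i \<omega>. (W t \<omega> - W s \<omega>) $ i) UNIV \<and>
        (\<forall>i. distributed M lborel (\<lambda>\<omega>. (W t \<omega> - W s \<omega>) $ i)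
               (normal_density 0 (sqrt (t - s))))) \<and>
     (\<forall>(ts :: nat \<Rightarrow> real) k. 0 \<le> ts 0 \<and> (\<forall>j<k. ts j < ts (Suc j)) \<longrightarrow>
        prob_space.indep_vars M (\<lambda>_. borel)
          (\<lambda>j \<omega>. W (ts (Suc j)) \<omega> - W (ts j) \<omega>) {..<k})"

definition indep_of_BM :: "'a measure \<Rightarrow> (real \<Rightarrow> 'a \<Rightarrow> real^'n) \<Rightarrow> ('a \<Rightarrow> real^'n) \<Rightarrow> bool" where
  "indep_of_BM M W Z \<longleftrightarrow>
     (\<forall>(ts :: nat \<Rightarrow> real) k. 0 \<le> ts 0 \<and> (\<forall>j<k. ts j < ts (Suc j)) \<longrightarrow>
        prob_space.indep_vars M (\<lambda>_. borel)
          (\<lambda>j \<omega>. if j = 0 then Z \<omega> else W (ts j) \<omega> - W (ts (j - 1)) \<omega>) {..k})"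

text \<open>(X,V) solves dX = V dt, dV = (1/eps)(b(X,t) - V) dt + sqrt(2/eps) dW, X_0 = x.
  Since the noise is additive, this is the pathwise integral equation.\<close>
definition langevin_solution ::
  "'a measure \<Rightarrow> real \<Rightarrow> (real^'n \<Rightarrow> real \<Rightarrow> real^'n) \<Rightarrow> real^'n \<Rightarrow>
   (real \<Rightarrow> 'a \<Rightarrow> real^'n) \<Rightarrow> (real \<Rightarrow> 'a \<Rightarrow> real^'n) \<Rightarrow> (real \<Rightarrow> 'a \<Rightarrow> real^'n) \<Rightarrow> bool" where
  "langevin_solution M \<epsilon> b x W X V \<longleftrightarrow>
     (\<forall>t. X t \<in> borel_measurable M \<and> V t \<in> borel_measurable M) \<and>
     (AE \<omega> in M. continuous_on {0..} (\<lambda>t. V t \<omega>) \<and>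
        (\<forall>t\<ge>0. X t \<omega> = x + integral {0..t} (\<lambda>s. V s \<omega>) \<and>
                V t \<omega> = V 0 \<omega> + integral {0..t} (\<lambda>s. (1 / \<epsilon>) *\<^sub>R (b (X s \<omega>) s - V s \<omega>))
                          + sqrt (2 / \<epsilon>) *\<^sub>R W t \<omega>))"

end

theory Submission
  imports Defs
begin

(* Write c = sqrt (2 / eps) and k s = exp ((s - t) / eps) / eps.  Variation of constants for the
   linear relaxation dV = (b - V) dt / eps, followed by an integration by parts of the additive
   noise, gives path by path
     V t = exp (- t / eps) (V 0 + c W t) + integral_0^t k s (b (X s, s) + c (W t - W s)) ds.
   The weight k has mass at most 1, so by Jensen |V t|^p is bounded by a multiple of
     |V 0|^p + sup |b|^p + (c exp (- t / eps) |W t|)^p + c^p integral_0^t k s |W t - W s|^p ds.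
   Gaussian moments E |W t - W s|^p <= K (t - s)^(p/2) and the bound k s (t - s)^(p/2) <=
   (p eps)^(p/2) exp ((s - t) / (2 eps)) / eps make the last two expectations at most a constant
   times c^p eps^(p/2) = 2^(p/2), uniformly in t and eps. *)

section \<open>Elementary inequalities\<close>

lemma powr_sum_le_card_powr_mult_sum_powr:
  fixes a :: "'i \<Rightarrow> real"
  assumes "finite I" "I \<noteq> {}" "\<And>i. i \<in> I \<Longrightarrow> 0 \<le> a i" "0 < p"
  shows "(\<Sum>i\<in>I. a i) powr p \<le> real (card I) powr p * (\<Sum>i\<in>I. a i powr p)"
proof -
  obtain i0 where i0: "i0 \<in> I" "\<And>i. i \<in> I \<Longrightarrow> a i \<le> a i0"
  proof -
    have "Max (a ` I) \<in> a ` I" using assms(1,2) by simp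
    then obtain i0 where "i0 \<in> I" "Max (a ` I) = a i0" by auto
    moreover have "a i \<le> Max (a ` I)" if "i \<in> I" for i using assms(1) that by simp
    ultimately show ?thesis using that by auto
  qed
  have "(\<Sum>i\<in>I. a i) powr p \<le> (real (card I) * a i0) powr p"
    using sum_mono[of I a "\<lambda>_. a i0"] i0 assms by (intro powr_mono2) (auto intro: sum_nonneg)
  also have "\<dots> = real (card I) powr p * a i0 powr p"
    using i0 assms by (simp add: powr_mult)
  also have "\<dots> \<le> real (card I) powr p * (\<Sum>i\<in>I. a i powr p)"
    using i0 assms by (intro mult_left_mono member_le_sum[of i0 I "\<lambda>i. a i powr p"]) auto
  finally show ?thesis .
qed

lemma powr_add_le:
  fixes a b :: real
  assumes "0 \<le> a" "0 \<le> b" "0 < p"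
  shows "(a + b) powr p \<le> 2 powr p * (a powr p + b powr p)"
proof -
  have "(\<Sum>i\<in>{0, 1::nat}. [a, b] ! i) powr p
      \<le> real (card {0, 1::nat}) powr p * (\<Sum>i\<in>{0, 1::nat}. ([a, b] ! i) powr p)"
    using assms by (intro powr_sum_le_card_powr_mult_sum_powr) auto
  then show ?thesis by simp
qed

lemma powr_add4_le:
  fixes a b c d :: real
  assumes "0 \<le> a" "0 \<le> b" "0 \<le> c" "0 \<le> d" "0 < p"
  shows "(a + b + c + d) powr p \<le> 4 powr p * (a powr p + b powr p + c powr p + d powr p)"
proof -
  have "(\<Sum>i\<in>{0, 1, 2, 3::nat}. [a, b, c, d] ! i) powr p
      \<le> real (card {0, 1, 2, 3::nat}) powr p * (\<Sum>i\<in>{0, 1, 2, 3::nat}. ([a, b, c, d] ! i) powr p)"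
    using assms by (intro powr_sum_le_card_powr_mult_sum_powr) auto
  then show ?thesis by (simp add: add_ac)
qed

lemma Youngs_inequality_scaled:
  fixes a c p :: real
  assumes "1 < p" "0 \<le> a" "0 < c"
  shows "a \<le> a powr p / (p * c powr (p - 1)) + c * (1 - 1 / p)"
proof -
  define q where "q = p / (p - 1)"
  have q: "1 < q" "1 / p + 1 / q = 1" "1 / q = 1 - 1 / p"
    using assms unfolding q_def by (simp_all add: field_simps)
  have "(a / c) * 1 \<le> (a / c) powr p / p + 1 powr q / q"
    by (rule Youngs_inequality) (use assms q in auto)
  then have "c * (a / c) \<le> c * ((a / c) powr p / p + 1 - 1 / p)"
    using assms q by (intro mult_left_mono) auto
  moreover have "c * ((a / c) powr p / p + 1 - 1 / p) = a powr p / (p * c powr (p - 1)) + c * (1 - 1 / p)"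
    using assms by (simp add: powr_divide powr_diff field_simps)
  ultimately show ?thesis using assms by simp
qed

lemma weighted_integral_le_Young:
  fixes w g :: "real \<Rightarrow> real"
  assumes p: "1 < p" and c: "0 < c"
    and w0: "\<And>s. s \<in> S \<Longrightarrow> 0 \<le> w s" and g0: "\<And>s. s \<in> S \<Longrightarrow> 0 \<le> g s"
    and int_w: "w integrable_on S" and int_wg: "(\<lambda>s. w s * g s) integrable_on S"
    and int_wgp: "(\<lambda>s. w s * g s powr p) integrable_on S"
    and mass: "integral S w \<le> 1"
  shows "integral S (\<lambda>s. w s * g s)
           \<le> integral S (\<lambda>s. w s * g s powr p) / (p * c powr (p - 1)) + c * (1 - 1 / p)"
proof -
  define K where "K = p * c powr (p - 1)"
  have "w s * g s \<le> (w s * g s powr p) / K + c * (1 - 1 / p) * w s" if "s \<in> S" for s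
  proof -
    have "w s * g s \<le> w s * (g s powr p / K + c * (1 - 1 / p))"
      unfolding K_def using w0 g0 p c that by (intro mult_left_mono Youngs_inequality_scaled) auto
    then show ?thesis by (simp add: algebra_simps)
  qed
  then have "integral S (\<lambda>s. w s * g s) \<le> integral S (\<lambda>s. (w s * g s powr p) / K + c * (1 - 1 / p) * w s)"
    using int_w int_wg int_wgp
    by (intro integral_le) (auto intro!: integrable_add integrable_on_divide integrable_on_mult_right)
  also have "\<dots> = integral S (\<lambda>s. (w s * g s powr p) / K) + integral S (\<lambda>s. c * (1 - 1 / p) * w s)"
    using int_w int_wgp by (intro integral_add integrable_on_divide integrable_on_mult_right)
  also have "\<dots> = integral S (\<lambda>s. w s * g s powr p) / K + c * (1 - 1 / p) * integral S w"
    unfolding divide_inverse integral_mult_left integral_mult_right ..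
  also have "\<dots> \<le> integral S (\<lambda>s. w s * g s powr p) / K + c * (1 - 1 / p)"
    using mass c p by (intro add_left_mono mult_left_le) (auto simp: field_simps)
  finally show ?thesis unfolding K_def .
qed

lemma powr_weighted_integral_le:
  fixes w g :: "real \<Rightarrow> real"
  assumes p: "1 < p" and w0: "\<And>s. s \<in> S \<Longrightarrow> 0 \<le> w s" and g0: "\<And>s. s \<in> S \<Longrightarrow> 0 \<le> g s"
    and "w integrable_on S" and int_wg: "(\<lambda>s. w s * g s) integrable_on S"
    and int_wgp: "(\<lambda>s. w s * g s powr p) integrable_on S"
    and "integral S w \<le> 1"
  shows "(integral S (\<lambda>s. w s * g s)) powr p \<le> integral S (\<lambda>s. w s * g s powr p)"
proof -
  define I where "I = integral S (\<lambda>s. w s * g s)"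
  define J where "J = integral S (\<lambda>s. w s * g s powr p)"
  have I0: "0 \<le> I" unfolding I_def using int_wg w0 g0 by (intro integral_nonneg) auto
  have J0: "0 \<le> J" unfolding J_def using int_wgp w0 g0 by (intro integral_nonneg) auto
  have Young: "I \<le> J / (p * c powr (p - 1)) + c * (1 - 1 / p)" if "0 < c" for c
    unfolding I_def J_def using assms that by (intro weighted_integral_le_Young) auto
  show ?thesis
  proof (cases "J = 0")
    case True
    have "I \<le> 0"
    proof (rule field_le_epsilon)
      fix e :: real assume "0 < e"
      then have "I \<le> e * (1 - 1 / p)" using Young[of e] True by simp
      also have "\<dots> \<le> 0 + e" using \<open>0 < e\<close> p by (simp add: right_diff_distrib)
      finally show "I \<le> 0 + e" .
    qed
    then show ?thesis using I0 J0 True p unfolding I_def[symmetric] J_def[symmetric] by simp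
  next
    case False
    then have "0 < J" using J0 by simp
    \<comment> \<open>the optimal choice of c in Young's inequality\<close>
    define c where "c = J powr (1 / p)"
    have "0 < c" unfolding c_def using \<open>0 < J\<close> by simp
    have "c powr (p - 1) = J / c"
      unfolding c_def using \<open>0 < J\<close> p by (simp add: powr_powr powr_diff diff_divide_distrib)
    then have "I \<le> c"
      using Young[OF \<open>0 < c\<close>] \<open>0 < c\<close> p by (simp add: field_simps)
    then have "I powr p \<le> c powr p" using I0 p by (intro powr_mono2) auto
    also have "c powr p = J" unfolding c_def using \<open>0 < J\<close> p by (simp add: powr_powr)
    finally show ?thesis unfolding I_def J_def .
  qed
qed

lemma abs_powr_le_one_plus_even_power:
  fixes y p :: real
  assumes "0 \<le> p" "p \<le> real (2 * k)"
  shows "\<bar>y\<bar> powr p \<le> 1 + y ^ (2 * k)"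
proof (cases "\<bar>y\<bar> \<le> 1")
  case True
  then have "\<bar>y\<bar> powr p \<le> 1"
    using assms by (cases "y = 0") (auto intro: powr_le1)
  moreover have "0 \<le> y ^ (2 * k)" by (simp add: power_mult)
  ultimately show ?thesis by linarith
next
  case False
  then have "\<bar>y\<bar> powr p \<le> \<bar>y\<bar> powr (real (2 * k))"
    using assms by (intro powr_mono) auto
  also have "\<dots> = \<bar>y\<bar> ^ (2 * k)" using False by (subst powr_realpow) auto
  also have "\<dots> = y ^ (2 * k)" by (simp add: power_even_abs)
  finally show ?thesis by simp
qed

lemma powr_mult_exp_neg_le:
  fixes u a :: real
  assumes "0 \<le> u" "0 < a"
  shows "u powr a * exp (- u / 2) \<le> (2 * a) powr a"
proof -
  have "u / (2 * a) \<le> exp (u / (2 * a))"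
    using exp_ge_add_one_self[of "u / (2 * a)"] by linarith
  then have "(u / (2 * a)) powr a \<le> exp (u / (2 * a)) powr a"
    using assms by (intro powr_mono2) auto
  also have "exp (u / (2 * a)) powr a = exp (u / 2)"
    using assms by (simp add: powr_def)
  finally have "u powr a \<le> (2 * a) powr a * exp (u / 2)"
    using assms by (simp add: powr_divide divide_le_eq mult.commute)
  then show ?thesis by (simp add: exp_minus divide_le_eq field_simps)
qed

lemma exp_weight_mult_powr_le:
  fixes s t \<epsilon> p :: real
  assumes "0 < \<epsilon>" "s \<le> t" "0 < p"
  shows "exp ((s - t) / \<epsilon>) / \<epsilon> * (t - s) powr (p / 2)
         \<le> p powr (p / 2) * \<epsilon> powr (p / 2) * (exp ((s - t) / (2 * \<epsilon>)) / \<epsilon>)"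
proof -
  define u where "u = (t - s) / \<epsilon>"
  have u0: "0 \<le> u" unfolding u_def using assms by simp
  have split: "exp ((s - t) / \<epsilon>) / \<epsilon> * (t - s) powr (p / 2)
      = (u powr (p / 2) * exp (- u / 2)) * (\<epsilon> powr (p / 2) * (exp ((s - t) / (2 * \<epsilon>)) / \<epsilon>))"
  proof -
    have "(t - s) powr (p / 2) = \<epsilon> powr (p / 2) * u powr (p / 2)"
      unfolding u_def using assms by (simp add: powr_divide)
    moreover have "exp ((s - t) / \<epsilon>) = exp (- u / 2) * exp ((s - t) / (2 * \<epsilon>))"
      unfolding u_def using assms by (simp add: exp_add[symmetric] field_simps)
    ultimately show ?thesis by simp
  qed
  have "u powr (p / 2) * exp (- u / 2) \<le> p powr (p / 2)"
    using powr_mult_exp_neg_le[of u "p / 2"] u0 assms by simp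
  moreover have "0 \<le> \<epsilon> powr (p / 2) * (exp ((s - t) / (2 * \<epsilon>)) / \<epsilon>)"
    using assms by simp
  ultimately show ?thesis
    unfolding split mult.assoc[of "p powr (p / 2)"] by (rule mult_right_mono)
qed

lemma sqrt_two_div_powr_mult_powr:
  fixes \<epsilon> p :: real
  assumes "0 < \<epsilon>"
  shows "sqrt (2 / \<epsilon>) powr p * \<epsilon> powr (p / 2) = 2 powr (p / 2)"
  using assms by (simp add: powr_half_sqrt[symmetric] powr_powr powr_divide)

lemma exp_weight_has_integral:
  fixes \<epsilon> T :: real
  assumes "0 < \<epsilon>" "0 \<le> T"
  shows "((\<lambda>s. exp ((s - T) / \<epsilon>) / \<epsilon>) has_integral (1 - exp (- T / \<epsilon>))) {0..T}"
proof -
  have "((\<lambda>s. exp ((s - T) / \<epsilon>) / \<epsilon>) has_integral (exp ((T - T) / \<epsilon>) - exp ((0 - T) / \<epsilon>))) {0..T}"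
  proof (rule fundamental_theorem_of_calculus)
    fix s assume "s \<in> {0..T}"
    have "((\<lambda>s. exp ((s - T) / \<epsilon>)) has_real_derivative exp ((s - T) / \<epsilon>) / \<epsilon>) (at s within {0..T})"
      using assms by (auto intro!: derivative_eq_intros)
    then show "((\<lambda>s. exp ((s - T) / \<epsilon>)) has_vector_derivative exp ((s - T) / \<epsilon>) / \<epsilon>) (at s within {0..T})"
      by (simp add: has_real_derivative_iff_has_vector_derivative)
  qed (use assms in simp)
  then show ?thesis by simp
qed

section \<open>Regularity of the drift\<close>

lemma axis_lipschitz_if_bounded_derivative:
  fixes f :: "real^'n \<Rightarrow> real"
  assumes deriv: "\<And>x. ((\<lambda>h. f (x + h *\<^sub>R axis j 1)) has_real_derivative f' x) (at 0)"
    and bound: "\<And>x. \<bar>f' x\<bar> \<le> L"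
  shows "\<bar>f (x + h *\<^sub>R axis j 1) - f x\<bar> \<le> L * \<bar>h\<bar>"
proof -
  define \<phi> where "\<phi> h = f (x + h *\<^sub>R axis j 1)" for h
  have "(\<phi> has_real_derivative f' (x + z *\<^sub>R axis j 1)) (at z within UNIV)" for z
  proof -
    have "((\<lambda>h. \<phi> (h + z)) has_real_derivative f' (x + z *\<^sub>R axis j 1)) (at 0)"
      using deriv[of "x + z *\<^sub>R axis j 1"] by (simp add: \<phi>_def algebra_simps)
    then show ?thesis
      using DERIV_shift[of \<phi> _ 0 z] by simp
  qed
  then have "norm (\<phi> h - \<phi> 0) \<le> L * norm (h - 0)"
    by (intro field_differentiable_bound[OF convex_UNIV]) (use bound in auto)
  then show ?thesis by (simp add: \<phi>_def)
qed

lemma halfline_lipschitz_if_bounded_derivative: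
  fixes \<phi> :: "real \<Rightarrow> real"
  assumes deriv: "\<And>t. 0 \<le> t \<Longrightarrow> ((\<lambda>h. \<phi> (t + h)) has_real_derivative \<phi>' t) (at 0 within {-t..})"
    and bound: "\<And>t. 0 \<le> t \<Longrightarrow> \<bar>\<phi>' t\<bar> \<le> L" and "0 \<le> s" "0 \<le> t"
  shows "\<bar>\<phi> s - \<phi> t\<bar> \<le> L * \<bar>s - t\<bar>"
proof -
  have "(\<phi> has_real_derivative \<phi>' z) (at z within {0..})" if z: "0 \<le> z" for z
  proof -
    have shift: "(\<lambda>s. s - z) ` {0..} = {-z..}"
      by (auto simp: image_iff intro!: bexI[where x="_ + z"])
    have "((\<lambda>h. \<phi> (z + h)) \<circ> (\<lambda>s. s - z) has_real_derivative \<phi>' z * 1) (at z within {0..})"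
      by (rule DERIV_image_chain) (use deriv[OF z] shift in \<open>auto intro!: derivative_eq_intros\<close>)
    then show ?thesis by (simp add: o_def)
  qed
  then have "norm (\<phi> s - \<phi> t) \<le> L * norm (s - t)"
    by (intro field_differentiable_bound[OF convex_real_interval(1)]) (use bound assms in auto)
  then show ?thesis by simp
qed

lemma abs_diff_le_sum_axis_lipschitz:
  fixes f :: "real^'n \<Rightarrow> real"
  assumes axis: "\<And>j x h. \<bar>f (x + h *\<^sub>R axis j 1) - f x\<bar> \<le> L j * \<bar>h\<bar>"
    and "finite S" and "\<And>i. i \<notin> S \<Longrightarrow> y $ i = x $ i"
  shows "\<bar>f y - f x\<bar> \<le> (\<Sum>i\<in>S. L i * \<bar>y $ i - x $ i\<bar>)"
  using assms(2,3)
proof (induction S arbitrary: x rule: finite_induct)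
  case empty
  then have "y = x" by (simp add: vec_eq_iff)
  then show ?case by simp
next
  case (insert a S)
  define z where "z = x + (y $ a - x $ a) *\<^sub>R axis a 1"
  have z: "z $ i = (if i = a then y $ a else x $ i)" for i
    by (simp add: z_def axis_def)
  have "\<bar>f y - f z\<bar> \<le> (\<Sum>i\<in>S. L i * \<bar>y $ i - z $ i\<bar>)"
    using insert.prems z by (intro insert.IH) auto
  also have "\<dots> = (\<Sum>i\<in>S. L i * \<bar>y $ i - x $ i\<bar>)"
    using insert.hyps z by (intro sum.cong) auto
  finally have "\<bar>f y - f z\<bar> \<le> (\<Sum>i\<in>S. L i * \<bar>y $ i - x $ i\<bar>)" .
  moreover have "\<bar>f z - f x\<bar> \<le> L a * \<bar>y $ a - x $ a\<bar>"
    unfolding z_def by (rule axis)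
  ultimately show ?case using insert.hyps by simp
qed

lemma smooth_bounded_family_lipschitz:
  fixes F :: "(real^'n \<Rightarrow> real \<Rightarrow> real) set"
  assumes bounded: "\<forall>f\<in>F. \<exists>B. \<forall>x t. 0 \<le> t \<longrightarrow> \<bar>f x t\<bar> \<le> B"
    and deriv: "\<forall>f\<in>F.
           (\<forall>j. \<exists>g\<in>F. \<forall>x t. 0 \<le> t \<longrightarrow>
                ((\<lambda>h. f (x + h *\<^sub>R axis j 1) t) has_real_derivative g x t) (at 0)) \<and>
           (\<exists>g\<in>F. \<forall>x t. 0 \<le> t \<longrightarrow>
                ((\<lambda>h. f x (t + h)) has_real_derivative g x t) (at 0 within {-t..}))"
    and "f \<in> F"
  obtains L where "0 \<le> L"
    "\<And>x y s t. 0 \<le> s \<Longrightarrow> 0 \<le> t \<Longrightarrow> \<bar>f y s - f x t\<bar> \<le> L * (norm (y - x) + \<bar>s - t\<bar>)"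
proof -
  obtain bnd where bnd: "\<And>g x t. g \<in> F \<Longrightarrow> 0 \<le> t \<Longrightarrow> \<bar>g x t\<bar> \<le> bnd g"
    using bchoice[OF bounded] by blast
  obtain G where G: "\<And>j. G j \<in> F" and G_deriv: "\<And>j x t. 0 \<le> t \<Longrightarrow>
      ((\<lambda>h. f (x + h *\<^sub>R axis j 1) t) has_real_derivative G j x t) (at 0)"
    using choice[of "\<lambda>j g. g \<in> F \<and> (\<forall>x t. 0 \<le> t \<longrightarrow>
        ((\<lambda>h. f (x + h *\<^sub>R axis j 1) t) has_real_derivative g x t) (at 0))"] deriv \<open>f \<in> F\<close>
    by blast
  obtain g where g: "g \<in> F" and g_deriv: "\<And>x t. 0 \<le> t \<Longrightarrow>
      ((\<lambda>h. f x (t + h)) has_real_derivative g x t) (at 0 within {-t..})"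
    using deriv \<open>f \<in> F\<close> by blast
  define Lx where "Lx = (\<Sum>j\<in>UNIV. \<bar>bnd (G j)\<bar>)"
  have space: "\<bar>f y t - f x t\<bar> \<le> Lx * norm (y - x)" if "0 \<le> t" for x y t
  proof -
    have "\<bar>f y t - f x t\<bar> \<le> (\<Sum>i\<in>UNIV. \<bar>bnd (G i)\<bar> * \<bar>y $ i - x $ i\<bar>)"
    proof (rule abs_diff_le_sum_axis_lipschitz[where f="\<lambda>z. f z t"])
      show "\<bar>f (z + h *\<^sub>R axis j 1) t - f z t\<bar> \<le> \<bar>bnd (G j)\<bar> * \<bar>h\<bar>" for j z h
        using G_deriv bnd[OF G] that
        using G_deriv bnd[OF G] that
        by (intro axis_lipschitz_if_bounded_derivative[where f'="\<lambda>z. G j z t"])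
          (auto intro: order_trans[OF _ abs_ge_self])
    qed auto
    also have "\<dots> \<le> (\<Sum>i\<in>UNIV. \<bar>bnd (G i)\<bar> * norm (y - x))"
      by (intro sum_mono mult_left_mono) (auto simp: component_le_norm_cart[of "y - x", simplified])
    finally show ?thesis by (simp add: Lx_def sum_distrib_right)
  qed
  have time: "\<bar>f x s - f x t\<bar> \<le> \<bar>bnd g\<bar> * \<bar>s - t\<bar>" if "0 \<le> s" "0 \<le> t" for x s t
    using g_deriv bnd[OF g] that
    by (intro halfline_lipschitz_if_bounded_derivative[where \<phi>'="g x"])
      (auto intro: order_trans[OF _ abs_ge_self])
  show ?thesis
  proof (rule that[of "Lx + \<bar>bnd g\<bar>"])
    show "0 \<le> Lx + \<bar>bnd g\<bar>" by (simp add: Lx_def sum_nonneg)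
    fix x y and s t :: real assume st: "0 \<le> s" "0 \<le> t"
    have "\<bar>f y s - f x t\<bar> \<le> Lx * norm (y - x) + \<bar>bnd g\<bar> * \<bar>s - t\<bar>"
      using space[OF st(1), of y x] time[OF st, of x] by linarith
    also have "\<dots> \<le> (Lx + \<bar>bnd g\<bar>) * (norm (y - x) + \<bar>s - t\<bar>)"
      by (simp add: algebra_simps Lx_def sum_nonneg)
    finally show "\<bar>f y s - f x t\<bar> \<le> (Lx + \<bar>bnd g\<bar>) * (norm (y - x) + \<bar>s - t\<bar>)" .
  qed
qed

lemma smooth_bounded_imp_bounded:
  fixes b :: "real^'n \<Rightarrow> real \<Rightarrow> real^'n"
  assumes "smooth_bounded b"
  obtains B where "0 \<le> B" "\<And>x t. 0 \<le> t \<Longrightarrow> norm (b x t) \<le> B"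
proof -
  obtain F where "\<forall>i. (\<lambda>x t. b x t $ i) \<in> F" "\<forall>f\<in>F. \<exists>B. \<forall>x t. 0 \<le> t \<longrightarrow> \<bar>f x t\<bar> \<le> B"
    using assms unfolding smooth_bounded_def by blast
  then have "\<forall>i. \<exists>B. \<forall>x t. 0 \<le> t \<longrightarrow> \<bar>b x t $ i\<bar> \<le> B"
    by fast
  then obtain bnd where bnd: "\<And>i x t. 0 \<le> t \<Longrightarrow> \<bar>b x t $ i\<bar> \<le> bnd i"
    by (metis choice)
  show ?thesis
  proof (rule that[of "\<Sum>i\<in>UNIV. \<bar>bnd i\<bar>"])
    show "0 \<le> (\<Sum>i\<in>UNIV. \<bar>bnd i\<bar>)" by (simp add: sum_nonneg)
    fix x and t :: real assume "0 \<le> t"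
    have "norm (b x t) \<le> (\<Sum>i\<in>UNIV. \<bar>b x t $ i\<bar>)" by (rule norm_le_l1_cart)
    also have "\<dots> \<le> (\<Sum>i\<in>UNIV. \<bar>bnd i\<bar>)"
      using bnd[OF \<open>0 \<le> t\<close>] by (intro sum_mono order_trans[OF _ abs_ge_self])
    finally show "norm (b x t) \<le> (\<Sum>i\<in>UNIV. \<bar>bnd i\<bar>)" .
  qed
qed

lemma smooth_bounded_imp_continuous:
  fixes b :: "real^'n \<Rightarrow> real \<Rightarrow> real^'n"
  assumes "smooth_bounded b"
  shows "continuous_on (UNIV \<times> {0..}) (\<lambda>z. b (fst z) (snd z))"
proof -
  obtain F where F: "\<forall>i. (\<lambda>x t. b x t $ i) \<in> F" "\<forall>f\<in>F. \<exists>B. \<forall>x t. 0 \<le> t \<longrightarrow> \<bar>f x t\<bar> \<le> B"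
    "\<forall>f\<in>F.
           (\<forall>j. \<exists>g\<in>F. \<forall>x t. 0 \<le> t \<longrightarrow>
                ((\<lambda>h. f (x + h *\<^sub>R axis j 1) t) has_real_derivative g x t) (at 0)) \<and>
           (\<exists>g\<in>F. \<forall>x t. 0 \<le> t \<longrightarrow>
                ((\<lambda>h. f x (t + h)) has_real_derivative g x t) (at 0 within {-t..}))"
    using assms unfolding smooth_bounded_def by blast
  have "continuous_on (UNIV \<times> {0..}) (\<lambda>z. b (fst z) (snd z) $ i)" for i
  proof -
    obtain L where L: "0 \<le> L" "\<And>x y s t. 0 \<le> s \<Longrightarrow> 0 \<le> t \<Longrightarrow>
        \<bar>b y s $ i - b x t $ i\<bar> \<le> L * (norm (y - x) + \<bar>s - t\<bar>)"
      using smooth_bounded_family_lipschitz[OF F(2,3)] F(1) by blast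
    have "(2 * L)-lipschitz_on (UNIV \<times> {0..}) (\<lambda>z. b (fst z) (snd z) $ i)"
    proof (rule lipschitz_onI)
      fix z1 z2 :: "(real^'n) \<times> real" assume "z1 \<in> UNIV \<times> {0..}" "z2 \<in> UNIV \<times> {0..}"
      then have "\<bar>b (fst z1) (snd z1) $ i - b (fst z2) (snd z2) $ i\<bar>
          \<le> L * (norm (fst z1 - fst z2) + \<bar>snd z1 - snd z2\<bar>)"
        using L(2) by auto
      also have "\<dots> \<le> L * (2 * dist z1 z2)"
        using norm_fst_le[of "fst z1 - fst z2" "snd z1 - snd z2"]
          norm_snd_le[of "snd z1 - snd z2" "fst z1 - fst z2"] L(1)
        by (intro mult_left_mono) (simp_all add: dist_norm flip: minus_prod_def)
      finally show "dist (b (fst z1) (snd z1) $ i) (b (fst z2) (snd z2) $ i) \<le> 2 * L * dist z1 z2"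
        by (simp add: dist_real_def)
    qed (use L in simp)
    then show ?thesis by (rule lipschitz_on_continuous_on)
  qed
  then have "continuous_on (UNIV \<times> {0..}) (\<lambda>z. \<chi> i. b (fst z) (snd z) $ i)"
    by (intro continuous_on_vec_lambda)
  then show ?thesis by simp
qed

section \<open>The velocity equation path by path\<close>

lemma integral_equation_has_vector_derivative:
  fixes \<psi> \<phi> :: "real \<Rightarrow> 'a::banach"
  assumes "continuous_on {0..T} \<phi>" and "\<And>t. t \<in> {0..T} \<Longrightarrow> \<psi> t = \<psi> 0 + integral {0..t} \<phi>"
    and "s \<in> {0..T}"
  shows "(\<psi> has_vector_derivative \<phi> s) (at s within {0..T})"
proof (rule has_vector_derivative_transform[OF assms(3) assms(2)])
  show "((\<lambda>t. \<psi> 0 + integral {0..t} \<phi>) has_vector_derivative \<phi> s) (at s within {0..T})"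
    using integral_has_vector_derivative[OF assms(1,3)] by (auto intro!: derivative_eq_intros)
qed

lemma relaxation_variation_of_constants:
  fixes \<psi> f :: "real \<Rightarrow> 'a::banach"
  assumes eps: "0 < \<epsilon>" and T: "0 \<le> T"
    and cont: "continuous_on {0..T} f" "continuous_on {0..T} \<psi>"
    and eq: "\<And>t. t \<in> {0..T} \<Longrightarrow> \<psi> t = \<psi> 0 + integral {0..t} (\<lambda>s. (1 / \<epsilon>) *\<^sub>R (f s - \<psi> s))"
  shows "\<psi> T = exp (- T / \<epsilon>) *\<^sub>R \<psi> 0 + integral {0..T} (\<lambda>s. (exp ((s - T) / \<epsilon>) / \<epsilon>) *\<^sub>R f s)"
proof -
  let ?S = "{0..T}"
  have "((\<lambda>s. exp (s / \<epsilon>) *\<^sub>R \<psi> s) has_vector_derivative (exp (s / \<epsilon>) / \<epsilon>) *\<^sub>R f s) (at s within ?S)"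
    if "s \<in> ?S" for s
  proof -
    have "((\<lambda>s. exp (s / \<epsilon>)) has_field_derivative exp (s / \<epsilon>) * (1 / \<epsilon>)) (at s within ?S)"
      using eps by (auto intro!: derivative_eq_intros)
    moreover have "(\<psi> has_vector_derivative (1 / \<epsilon>) *\<^sub>R (f s - \<psi> s)) (at s within ?S)"
      using cont eq that by (intro integral_equation_has_vector_derivative continuous_intros)
    ultimately show ?thesis
      by (auto dest: has_vector_derivative_scaleR simp: algebra_simps)
  qed
  then have "((\<lambda>s. (exp (s / \<epsilon>) / \<epsilon>) *\<^sub>R f s) has_integral
      (exp (T / \<epsilon>) *\<^sub>R \<psi> T - exp (0 / \<epsilon>) *\<^sub>R \<psi> 0)) ?S"
    by (rule fundamental_theorem_of_calculus[OF T])
  then have "((\<lambda>s. exp (- T / \<epsilon>) *\<^sub>R ((exp (s / \<epsilon>) / \<epsilon>) *\<^sub>R f s)) has_integral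
      exp (- T / \<epsilon>) *\<^sub>R (exp (T / \<epsilon>) *\<^sub>R \<psi> T - \<psi> 0)) ?S"
    by (intro has_integral_cmul) simp
  moreover have "exp (- T / \<epsilon>) *\<^sub>R (exp (s / \<epsilon>) / \<epsilon>) *\<^sub>R f s = (exp ((s - T) / \<epsilon>) / \<epsilon>) *\<^sub>R f s" for s
    by (simp add: diff_divide_distrib exp_diff exp_minus field_simps)
  moreover have "exp (- T / \<epsilon>) *\<^sub>R (exp (T / \<epsilon>) *\<^sub>R \<psi> T - \<psi> 0) = \<psi> T - exp (- T / \<epsilon>) *\<^sub>R \<psi> 0"
    by (simp add: scaleR_diff_right flip: exp_add)
  ultimately have "((\<lambda>s. (exp ((s - T) / \<epsilon>) / \<epsilon>) *\<^sub>R f s) has_integral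
      \<psi> T - exp (- T / \<epsilon>) *\<^sub>R \<psi> 0) ?S"
    by (simp only:)
  then show ?thesis by (simp add: integral_unique)
qed

lemma relaxation_with_additive_noise_representation:
  fixes v w \<beta> :: "real \<Rightarrow> 'a::banach"
  assumes eps: "0 < \<epsilon>" and T: "0 \<le> T"
    and cont: "continuous_on {0..T} v" "continuous_on {0..T} w" "continuous_on {0..T} \<beta>"
    and w0: "w 0 = 0"
    and eq: "\<And>t. t \<in> {0..T} \<Longrightarrow> v t = v 0 + integral {0..t} (\<lambda>s. (1 / \<epsilon>) *\<^sub>R (\<beta> s - v s)) + c *\<^sub>R w t"
  shows "v T = exp (- T / \<epsilon>) *\<^sub>R (v 0 + c *\<^sub>R w T)
           + integral {0..T} (\<lambda>s. (exp ((s - T) / \<epsilon>) / \<epsilon>) *\<^sub>R (\<beta> s + c *\<^sub>R (w T - w s)))"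
proof -
  let ?S = "{0..T}" and ?k = "\<lambda>s. exp ((s - T) / \<epsilon>) / \<epsilon>"
  define f where "f s = \<beta> s - c *\<^sub>R w s" for s
  have cont_f: "continuous_on ?S f" unfolding f_def by (intro continuous_intros cont)
  \<comment> \<open>\<open>v - c w\<close> relaxes towards \<open>f\<close> without noise\<close>
  have "(\<lambda>s. (1 / \<epsilon>) *\<^sub>R (f s - (v s - c *\<^sub>R w s))) = (\<lambda>s. (1 / \<epsilon>) *\<^sub>R (\<beta> s - v s))"
    by (simp add: f_def)
  then have "v t - c *\<^sub>R w t
      = (v 0 - c *\<^sub>R w 0) + integral {0..t} (\<lambda>s. (1 / \<epsilon>) *\<^sub>R (f s - (v s - c *\<^sub>R w s)))"
    if "t \<in> ?S" for t
    using eq[OF that] by (simp add: w0)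
  with cont have "v T - c *\<^sub>R w T = exp (- T / \<epsilon>) *\<^sub>R v 0 + integral ?S (\<lambda>s. ?k s *\<^sub>R f s)"
    using relaxation_variation_of_constants[OF eps T cont_f, of "\<lambda>s. v s - c *\<^sub>R w s"]
    by (simp add: w0 continuous_intros)
  moreover have "integral ?S (\<lambda>s. ?k s *\<^sub>R (\<beta> s + c *\<^sub>R (w T - w s)))
      = integral ?S (\<lambda>s. ?k s *\<^sub>R f s) + (1 - exp (- T / \<epsilon>)) *\<^sub>R (c *\<^sub>R w T)"
  proof -
    have "((\<lambda>s. ?k s *\<^sub>R f s + ?k s *\<^sub>R (c *\<^sub>R w T)) has_integral
        integral ?S (\<lambda>s. ?k s *\<^sub>R f s) + (1 - exp (- T / \<epsilon>)) *\<^sub>R (c *\<^sub>R w T)) ?S"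
      using cont_f eps
      by (intro has_integral_add has_integral_scaleR_left exp_weight_has_integral T
          integrable_integral integrable_continuous_interval continuous_intros) auto
    then show ?thesis
      by (simp add: integral_unique f_def algebra_simps)
  qed
  ultimately show ?thesis by (simp add: algebra_simps)
qed

lemma norm_exp_weighted_integral_le:
  fixes w \<beta> :: "real \<Rightarrow> 'a::banach"
  assumes eps: "0 < \<epsilon>" and T: "0 \<le> T" and c: "0 \<le> c"
    and cont: "continuous_on {0..T} w" "continuous_on {0..T} \<beta>"
    and bound: "\<And>s. s \<in> {0..T} \<Longrightarrow> norm (\<beta> s) \<le> B"
  shows "norm (integral {0..T} (\<lambda>s. (exp ((s - T) / \<epsilon>) / \<epsilon>) *\<^sub>R (\<beta> s + c *\<^sub>R (w T - w s))))
           \<le> (1 - exp (- T / \<epsilon>)) * B + c * integral {0..T} (\<lambda>s. exp ((s - T) / \<epsilon>) / \<epsilon> * norm (w T - w s))"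
proof -
  let ?S = "{0..T}" and ?k = "\<lambda>s. exp ((s - T) / \<epsilon>) / \<epsilon>"
  have k: "(?k has_integral 1 - exp (- T / \<epsilon>)) ?S" by (rule exp_weight_has_integral[OF eps T])
  have int_norm: "(\<lambda>s. ?k s * norm (w T - w s)) integrable_on ?S"
    using eps by (intro integrable_continuous_interval continuous_intros cont) auto
  have "norm (integral ?S (\<lambda>s. ?k s *\<^sub>R (\<beta> s + c *\<^sub>R (w T - w s))))
      \<le> integral ?S (\<lambda>s. ?k s * B + c * (?k s * norm (w T - w s)))"
  proof (rule integral_norm_bound_integral)
    show "(\<lambda>s. ?k s *\<^sub>R (\<beta> s + c *\<^sub>R (w T - w s))) integrable_on ?S"
      using eps by (intro integrable_continuous_interval continuous_intros cont) auto
    show "(\<lambda>s. ?k s * B + c * (?k s * norm (w T - w s))) integrable_on ?S"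
      using k int_norm by (intro integrable_add integrable_on_mult_right integrable_on_mult_left) auto
    fix s assume "s \<in> ?S"
    then have "norm (\<beta> s + c *\<^sub>R (w T - w s)) \<le> B + c * norm (w T - w s)"
      using bound c by (intro order_trans[OF norm_triangle_ineq add_mono]) auto
    then have "?k s * norm (\<beta> s + c *\<^sub>R (w T - w s)) \<le> ?k s * (B + c * norm (w T - w s))"
      using eps by (intro mult_left_mono) auto
    then show "norm (?k s *\<^sub>R (\<beta> s + c *\<^sub>R (w T - w s))) \<le> ?k s * B + c * (?k s * norm (w T - w s))"
      using eps by (simp add: distrib_left mult.left_commute)
  qed
  also have "\<dots> = (1 - exp (- T / \<epsilon>)) * B + c * integral ?S (\<lambda>s. ?k s * norm (w T - w s))"
    using k int_norm
    by (intro integral_unique has_integral_add has_integral_mult_left has_integral_mult_right integrable_integral)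
  finally show ?thesis .
qed

lemma relaxation_with_additive_noise_norm_le:
  fixes v w \<beta> :: "real \<Rightarrow> 'a::banach"
  assumes eps: "0 < \<epsilon>" and T: "0 \<le> T" and c: "0 \<le> c"
    and cont: "continuous_on {0..T} v" "continuous_on {0..T} w" "continuous_on {0..T} \<beta>"
    and w0: "w 0 = 0" and bound: "\<And>s. s \<in> {0..T} \<Longrightarrow> norm (\<beta> s) \<le> B"
    and eq: "\<And>t. t \<in> {0..T} \<Longrightarrow> v t = v 0 + integral {0..t} (\<lambda>s. (1 / \<epsilon>) *\<^sub>R (\<beta> s - v s)) + c *\<^sub>R w t"
  shows "norm (v T) \<le> norm (v 0) + B + c * exp (- T / \<epsilon>) * norm (w T)
           + c * integral {0..T} (\<lambda>s. exp ((s - T) / \<epsilon>) / \<epsilon> * norm (w T - w s))"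
proof -
  let ?k = "\<lambda>s. exp ((s - T) / \<epsilon>) / \<epsilon>" and ?E = "exp (- T / \<epsilon>)"
  define I where "I = integral {0..T} (\<lambda>s. ?k s * norm (w T - w s))"
  have E: "0 < ?E" "?E \<le> 1" using eps T by auto
  have B: "0 \<le> B" using bound[of 0] T by (auto intro: order_trans[OF norm_ge_zero])
  have "v T = ?E *\<^sub>R (v 0 + c *\<^sub>R w T) + integral {0..T} (\<lambda>s. ?k s *\<^sub>R (\<beta> s + c *\<^sub>R (w T - w s)))"
    using eps T cont w0 eq by (rule relaxation_with_additive_noise_representation)
  then have "norm (v T) \<le> norm (?E *\<^sub>R (v 0 + c *\<^sub>R w T))
      + norm (integral {0..T} (\<lambda>s. ?k s *\<^sub>R (\<beta> s + c *\<^sub>R (w T - w s))))"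
    by (simp only: norm_triangle_ineq)
  moreover have "norm (?E *\<^sub>R (v 0 + c *\<^sub>R w T)) \<le> ?E * norm (v 0) + c * ?E * norm (w T)"
  proof -
    have "?E * norm (v 0 + c *\<^sub>R w T) \<le> ?E * (norm (v 0) + c * norm (w T))"
      using E c norm_triangle_ineq[of "v 0" "c *\<^sub>R w T"] by (intro mult_left_mono) auto
    then show ?thesis using E by (simp add: distrib_left mult_ac)
  qed
  moreover have "norm (integral {0..T} (\<lambda>s. ?k s *\<^sub>R (\<beta> s + c *\<^sub>R (w T - w s)))) \<le> (1 - ?E) * B + c * I"
    unfolding I_def using eps T c cont(2,3) bound by (rule norm_exp_weighted_integral_le)
  moreover have "?E * norm (v 0) \<le> norm (v 0)" "(1 - ?E) * B \<le> B"
    using E B by (simp_all add: mult_left_le_one_le)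
  ultimately show ?thesis unfolding I_def by linarith
qed

lemma continuous_on_drift_along_path:
  fixes b :: "'a::topological_space \<Rightarrow> real \<Rightarrow> 'b::topological_space"
  assumes "continuous_on (UNIV \<times> {0..}) (\<lambda>z. b (fst z) (snd z))" "continuous_on {0..T} x"
  shows "continuous_on {0..T} (\<lambda>s. b (x s) s)"
proof -
  have "continuous_on {0..T} ((\<lambda>z. b (fst z) (snd z)) \<circ> (\<lambda>s. (x s, s)))"
    using assms by (intro continuous_on_compose continuous_intros continuous_on_subset[OF assms(1)]) auto
  then show ?thesis by (simp add: o_def)
qed

lemma powr_exp_weighted_integral_le:
  fixes g :: "real \<Rightarrow> real"
  assumes eps: "0 < \<epsilon>" and T: "0 \<le> T" and p: "1 < p"
    and g: "continuous_on {0..T} g" "\<And>s. s \<in> {0..T} \<Longrightarrow> 0 \<le> g s"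
  shows "integral {0..T} (\<lambda>s. exp ((s - T) / \<epsilon>) / \<epsilon> * g s) powr p
           \<le> integral {0..T} (\<lambda>s. exp ((s - T) / \<epsilon>) / \<epsilon> * g s powr p)"
proof (rule powr_weighted_integral_le[OF p])
  let ?k = "\<lambda>s. exp ((s - T) / \<epsilon>) / \<epsilon>"
  have k: "(?k has_integral 1 - exp (- T / \<epsilon>)) {0..T}" by (rule exp_weight_has_integral[OF eps T])
  then show "?k integrable_on {0..T}" by blast
  show "integral {0..T} ?k \<le> 1" by (simp only: integral_unique[OF k]) simp
  show "(\<lambda>s. ?k s * g s) integrable_on {0..T}" "(\<lambda>s. ?k s * g s powr p) integrable_on {0..T}"
    using eps g p by (auto intro!: integrable_continuous_interval continuous_intros continuous_on_powr')
qed (use eps g in auto)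

lemma langevin_path_velocity_powr_le:
  fixes b :: "real^'n \<Rightarrow> real \<Rightarrow> real^'n" and v w xx :: "real \<Rightarrow> real^'n"
  assumes eps: "0 < \<epsilon>" and T: "0 \<le> T" and c: "0 \<le> c" and p: "1 < p"
    and bound: "\<And>x t. 0 \<le> t \<Longrightarrow> norm (b x t) \<le> B"
    and cont_b: "continuous_on (UNIV \<times> {0..}) (\<lambda>z. b (fst z) (snd z))"
    and cont: "continuous_on {0..} v" "continuous_on {0..} w" and w0: "w 0 = 0"
    and X: "\<And>t. 0 \<le> t \<Longrightarrow> xx t = x0 + integral {0..t} v"
    and V: "\<And>t. 0 \<le> t \<Longrightarrow> v t = v 0 + integral {0..t} (\<lambda>s. (1 / \<epsilon>) *\<^sub>R (b (xx s) s - v s)) + c *\<^sub>R w t"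
  shows "norm (v T) powr p \<le> 4 powr p * (norm (v 0) powr p + B powr p
           + (c * exp (- T / \<epsilon>) * norm (w T)) powr p
           + c powr p * integral {0..T} (\<lambda>s. exp ((s - T) / \<epsilon>) / \<epsilon> * norm (w T - w s) powr p))"
proof -
  let ?S = "{0..T}" and ?k = "\<lambda>s. exp ((s - T) / \<epsilon>) / \<epsilon>"
  define I where "I = integral ?S (\<lambda>s. ?k s * norm (w T - w s))"
  define J where "J = integral ?S (\<lambda>s. ?k s * norm (w T - w s) powr p)"
  define a where "a = c * exp (- T / \<epsilon>) * norm (w T)"
  have cont_S: "continuous_on ?S v" "continuous_on ?S w"
    using cont by (auto intro: continuous_on_subset)
  have "continuous_on ?S (\<lambda>t. x0 + integral {0..t} v)"
    by (intro continuous_intros indefinite_integral_continuous_1 integrable_continuous_interval cont_S)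
  then have "continuous_on ?S xx"
    by (rule continuous_on_eq) (use X in auto)
  with cont_b have cont_\<beta>: "continuous_on ?S (\<lambda>s. b (xx s) s)"
    by (rule continuous_on_drift_along_path)
  have cont_g: "continuous_on ?S (\<lambda>s. norm (w T - w s))" by (intro continuous_intros cont_S)
  have I0: "0 \<le> I"
    unfolding I_def using eps cont_g
    by (intro integral_nonneg integrable_continuous_interval continuous_on_mult[OF _ cont_g] continuous_intros) auto
  have B: "0 \<le> B" using bound[of 0] by (auto intro: order_trans[OF norm_ge_zero])
  have "norm (v T) \<le> norm (v 0) + B + a + c * I"
    unfolding a_def I_def
  proof (rule relaxation_with_additive_noise_norm_le[OF eps T c cont_S cont_\<beta> w0])
    fix t assume "t \<in> ?S"
    then show "norm (b (xx t) t) \<le> B" by (intro bound) auto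
    from \<open>t \<in> ?S\<close> show "v t = v 0 + integral {0..t} (\<lambda>s. (1 / \<epsilon>) *\<^sub>R (b (xx s) s - v s)) + c *\<^sub>R w t"
      by (intro V) auto
  qed
  then have "norm (v T) powr p \<le> (norm (v 0) + B + a + c * I) powr p"
    using p by (intro powr_mono2) auto
  also have "\<dots> \<le> 4 powr p * (norm (v 0) powr p + B powr p + a powr p + (c * I) powr p)"
    using B c p I0 unfolding a_def by (intro powr_add4_le) auto
  also have "(c * I) powr p \<le> c powr p * J"
  proof -
    have "I powr p \<le> J"
      unfolding I_def J_def by (rule powr_exp_weighted_integral_le[OF eps T p cont_g]) auto
    then show ?thesis using c I0 by (simp add: powr_mult mult_left_mono)
  qed
  finally show ?thesis
    by (simp add: a_def J_def mult_left_mono)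
qed

section \<open>Moments of Brownian increments\<close>

lemma normal_density_abs_moment_le:
  fixes \<sigma> p :: real
  assumes s: "0 < \<sigma>" and p: "0 \<le> p" "p \<le> real (2 * k)"
  shows "(\<integral>\<^sup>+x. ennreal (normal_density 0 \<sigma> x) * ennreal (\<bar>x\<bar> powr p) \<partial>lborel)
          \<le> ennreal (\<sigma> powr p * (1 + fact (2 * k) / (2 ^ k * fact k)))"
proof -
  let ?f = "\<lambda>x. \<sigma> powr p * (normal_density 0 \<sigma> x + (1 / \<sigma> ^ (2 * k)) * (normal_density 0 \<sigma> x * x ^ (2 * k)))"
  have "has_bochner_integral lborel (\<lambda>x. normal_density 0 \<sigma> x * (x - 0) ^ (2 * 0)) (fact (2 * 0) / ((2 / \<sigma>\<^sup>2) ^ 0 * fact 0))"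
    "has_bochner_integral lborel (\<lambda>x. normal_density 0 \<sigma> x * (x - 0) ^ (2 * k)) (fact (2 * k) / ((2 / \<sigma>\<^sup>2) ^ k * fact k))"
    using s by (rule normal_moment_even)+
  then have int: "has_bochner_integral lborel ?f (\<sigma> powr p * (1 + (1 / \<sigma> ^ (2 * k)) * (fact (2 * k) / ((2 / \<sigma>\<^sup>2) ^ k * fact k))))"
    by (intro has_bochner_integral_mult_right has_bochner_integral_add) auto
  have "(2 / \<sigma>\<^sup>2) ^ k * \<sigma> ^ (2 * k) = 2 ^ k"
    using s by (simp add: power_mult power_divide)
  then have const: "(1 / \<sigma> ^ (2 * k)) * (fact (2 * k) / ((2 / \<sigma>\<^sup>2) ^ k * fact k)) = fact (2 * k) / (2 ^ k * fact k)"
    using s by (simp add: field_simps)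
  have "ennreal (normal_density 0 \<sigma> x) * ennreal (\<bar>x\<bar> powr p) \<le> ennreal (?f x)" for x
  proof -
    have "\<bar>x\<bar> powr p = \<sigma> powr p * \<bar>x / \<sigma>\<bar> powr p"
      using s by (simp add: abs_divide powr_divide)
    also have "\<dots> \<le> \<sigma> powr p * (1 + (x / \<sigma>) ^ (2 * k))"
      by (intro mult_left_mono abs_powr_le_one_plus_even_power p) auto
    finally have "normal_density 0 \<sigma> x * \<bar>x\<bar> powr p \<le> normal_density 0 \<sigma> x * (\<sigma> powr p * (1 + (x / \<sigma>) ^ (2 * k)))"
      by (intro mult_left_mono normal_density_nonneg)
    also have "\<dots> = ?f x"
      by (simp add: power_divide field_simps)
    finally show ?thesis
      by (simp add: ennreal_mult'[symmetric] normal_density_nonneg)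
  qed
  then have "(\<integral>\<^sup>+x. ennreal (normal_density 0 \<sigma> x) * ennreal (\<bar>x\<bar> powr p) \<partial>lborel) \<le> (\<integral>\<^sup>+x. ennreal (?f x) \<partial>lborel)"
    by (intro nn_integral_mono)
  also have "\<dots> = ennreal (integral\<^sup>L lborel ?f)"
    using s by (intro nn_integral_eq_integral integrable.intros[OF int] AE_I2 mult_nonneg_nonneg
        add_nonneg_nonneg normal_density_nonneg) (auto simp: power_mult)
  finally show ?thesis
    unfolding has_bochner_integral_integral_eq[OF int] const .
qed

lemma nn_integral_norm_powr_le_sum_components:
  fixes Y :: "'a \<Rightarrow> real^'n"
  assumes [measurable]: "Y \<in> borel_measurable M" and p: "0 < p"
  shows "(\<integral>\<^sup>+\<omega>. ennreal (norm (Y \<omega>) powr p) \<partial>M)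
          \<le> ennreal (real CARD('n) powr p) * (\<Sum>i\<in>UNIV. \<integral>\<^sup>+\<omega>. ennreal (\<bar>Y \<omega> $ i\<bar> powr p) \<partial>M)"
proof -
  have "ennreal (norm (Y \<omega>) powr p)
      \<le> ennreal (real CARD('n) powr p) * (\<Sum>i\<in>UNIV. ennreal (\<bar>Y \<omega> $ i\<bar> powr p))" for \<omega>
  proof -
    have "norm (Y \<omega>) powr p \<le> (\<Sum>i\<in>UNIV. \<bar>Y \<omega> $ i\<bar>) powr p"
      using p by (intro powr_mono2 norm_le_l1_cart) auto
    also have "\<dots> \<le> real CARD('n) powr p * (\<Sum>i\<in>UNIV. \<bar>Y \<omega> $ i\<bar> powr p)"
      using p by (intro powr_sum_le_card_powr_mult_sum_powr) auto
    finally have "ennreal (norm (Y \<omega>) powr p)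
        \<le> ennreal (real CARD('n) powr p * (\<Sum>i\<in>UNIV. \<bar>Y \<omega> $ i\<bar> powr p))"
      by (rule ennreal_leI)
    then show ?thesis by (simp add: ennreal_mult sum_nonneg)
  qed
  then have "(\<integral>\<^sup>+\<omega>. ennreal (norm (Y \<omega>) powr p) \<partial>M)
      \<le> (\<integral>\<^sup>+\<omega>. ennreal (real CARD('n) powr p) * (\<Sum>i\<in>UNIV. ennreal (\<bar>Y \<omega> $ i\<bar> powr p)) \<partial>M)"
    by (intro nn_integral_mono)
  also have "\<dots> = ennreal (real CARD('n) powr p) * (\<integral>\<^sup>+\<omega>. (\<Sum>i\<in>UNIV. ennreal (\<bar>Y \<omega> $ i\<bar> powr p)) \<partial>M)"
    by (rule nn_integral_cmult) measurable
  also have "\<dots> = ennreal (real CARD('n) powr p) * (\<Sum>i\<in>UNIV. \<integral>\<^sup>+\<omega>. ennreal (\<bar>Y \<omega> $ i\<bar> powr p) \<partial>M)"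
    by (subst nn_integral_sum) auto
  finally show ?thesis .
qed

lemma std_BM_increment_component_moment_le:
  fixes W :: "real \<Rightarrow> 'a \<Rightarrow> real^'n"
  assumes BM: "std_BM M W" and st: "0 \<le> s" "s < t" and p: "0 \<le> p" "p \<le> real (2 * k)"
  shows "(\<integral>\<^sup>+\<omega>. ennreal (\<bar>(W t \<omega> - W s \<omega>) $ i\<bar> powr p) \<partial>M)
           \<le> ennreal ((t - s) powr (p / 2) * (1 + fact (2 * k) / (2 ^ k * fact k)))"
proof -
  have [measurable]: "\<And>r. W r \<in> borel_measurable M" using BM unfolding std_BM_def by blast
  have "distributed M lborel (\<lambda>\<omega>. (W t \<omega> - W s \<omega>) $ i) (normal_density 0 (sqrt (t - s)))"
    using BM st unfolding std_BM_def by auto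
  then have "(\<integral>\<^sup>+\<omega>. ennreal (\<bar>(W t \<omega> - W s \<omega>) $ i\<bar> powr p) \<partial>M)
      = (\<integral>\<^sup>+x. ennreal (normal_density 0 (sqrt (t - s)) x) * ennreal (\<bar>x\<bar> powr p) \<partial>lborel)"
    by (rule distributed_nn_integral[symmetric]) measurable
  also have "\<dots> \<le> ennreal (sqrt (t - s) powr p * (1 + fact (2 * k) / (2 ^ k * fact k)))"
    using st p by (intro normal_density_abs_moment_le) auto
  also have "sqrt (t - s) powr p = (t - s) powr (p / 2)"
    using st by (simp add: powr_half_sqrt[symmetric] powr_powr)
  finally show ?thesis .
qed

lemma std_BM_increment_moment:
  fixes p :: real
  assumes p: "0 < p"
  obtains K where "0 < K"
    "\<And>(M :: 'a measure) (W :: real \<Rightarrow> 'a \<Rightarrow> real^'n) s t. std_BM M W \<Longrightarrow> 0 \<le> s \<Longrightarrow> s \<le> t \<Longrightarrow>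
       (\<integral>\<^sup>+\<omega>. ennreal (norm (W t \<omega> - W s \<omega>) powr p) \<partial>M) \<le> ennreal (K * (t - s) powr (p / 2))"
proof
  define k where "k = nat \<lceil>p / 2\<rceil>"
  define K0 :: real where "K0 = 1 + fact (2 * k) / (2 ^ k * fact k)"
  have K0: "0 < K0" unfolding K0_def by (simp add: add_pos_nonneg)
  have k: "p \<le> real (2 * k)" unfolding k_def using p by linarith
  show "0 < real CARD('n) powr p * real CARD('n) * K0" using K0 by simp
  fix M :: "'a measure" and W :: "real \<Rightarrow> 'a \<Rightarrow> real^'n" and s t :: real
  assume BM: "std_BM M W" and "0 \<le> s" "s \<le> t"
  have [measurable]: "\<And>r. W r \<in> borel_measurable M" using BM unfolding std_BM_def by blast
  show "(\<integral>\<^sup>+\<omega>. ennreal (norm (W t \<omega> - W s \<omega>) powr p) \<partial>M)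
      \<le> ennreal (real CARD('n) powr p * real CARD('n) * K0 * (t - s) powr (p / 2))"
  proof (cases "s = t")
    case True
    then show ?thesis using p by simp
  next
    case False
    have "(\<integral>\<^sup>+\<omega>. ennreal (norm (W t \<omega> - W s \<omega>) powr p) \<partial>M)
        \<le> ennreal (real CARD('n) powr p) * (\<Sum>i\<in>UNIV. \<integral>\<^sup>+\<omega>. ennreal (\<bar>(W t \<omega> - W s \<omega>) $ i\<bar> powr p) \<partial>M)"
      using p by (intro nn_integral_norm_powr_le_sum_components) auto
    also have "\<dots> \<le> ennreal (real CARD('n) powr p) * (\<Sum>i\<in>(UNIV :: 'n set). ennreal ((t - s) powr (p / 2) * K0))"
      unfolding K0_def using BM \<open>0 \<le> s\<close> \<open>s \<le> t\<close> False p k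
      by (intro mult_left_mono sum_mono std_BM_increment_component_moment_le) auto
    also have "\<dots> = ennreal (real CARD('n) powr p * real CARD('n) * K0 * (t - s) powr (p / 2))"
      using K0 by (simp add: ennreal_mult[symmetric] ennreal_of_nat_eq_real_of_nat mult_ac)
    finally show ?thesis .
  qed
qed

section \<open>Joint measurability of continuous processes\<close>

lemma LIMSEQ_floor_mult_div:
  fixes s :: real
  shows "(\<lambda>k. of_int \<lfloor>s * real (Suc k)\<rfloor> / real (Suc k)) \<longlonglongrightarrow> s"
proof (rule tendsto_sandwich[where f="\<lambda>k. s - 1 / real (Suc k)" and h="\<lambda>k. s"])
  have "s * real (Suc k) - 1 \<le> of_int \<lfloor>s * real (Suc k)\<rfloor>" for k by linarith
  then have "(s * real (Suc k) - 1) / real (Suc k) \<le> of_int \<lfloor>s * real (Suc k)\<rfloor> / real (Suc k)" for k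
    by (intro divide_right_mono) auto
  then show "\<forall>\<^sub>F k in sequentially. s - 1 / real (Suc k) \<le> of_int \<lfloor>s * real (Suc k)\<rfloor> / real (Suc k)"
    by (simp add: diff_divide_distrib)
  have "of_int \<lfloor>s * real (Suc k)\<rfloor> \<le> s * real (Suc k)" for k by linarith
  then have "of_int \<lfloor>s * real (Suc k)\<rfloor> / real (Suc k) \<le> s * real (Suc k) / real (Suc k)" for k
    by (intro divide_right_mono) auto
  then show "\<forall>\<^sub>F k in sequentially. of_int \<lfloor>s * real (Suc k)\<rfloor> / real (Suc k) \<le> s"
    by simp
  show "(\<lambda>k. s - 1 / real (Suc k)) \<longlonglongrightarrow> s"
    using LIMSEQ_Suc[OF tendsto_diff[OF tendsto_const[of s] lim_inverse_n']] by (simp add: divide_inverse)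
qed simp

lemma borel_measurable_continuous_process:
  fixes X :: "real \<Rightarrow> 'a \<Rightarrow> 'b::metric_space"
  assumes meas: "\<And>r. X r \<in> borel_measurable M"
    and cont: "\<And>\<omega>. \<omega> \<in> space M \<Longrightarrow> continuous_on UNIV (\<lambda>r. X r \<omega>)"
  shows "(\<lambda>z. X (snd z) (fst z)) \<in> borel_measurable (M \<Otimes>\<^sub>M lborel)"
proof (rule borel_measurable_LIMSEQ_metric)
  let ?r = "\<lambda>k (s::real). of_int \<lfloor>s * real (Suc k)\<rfloor> / real (Suc k)"
  fix k :: nat
  show "(\<lambda>z. X (?r k (snd z)) (fst z)) \<in> borel_measurable (M \<Otimes>\<^sub>M lborel)"
  proof (rule measurable_compose_countable[where f="\<lambda>(i::int) z. X (of_int i / real (Suc k)) (fst z)"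
        and g="\<lambda>z. \<lfloor>snd z * real (Suc k)\<rfloor>"])
    show "(\<lambda>z. X (of_int i / real (Suc k)) (fst z)) \<in> borel_measurable (M \<Otimes>\<^sub>M lborel)" for i :: int
      using meas by measurable
  qed measurable
next
  fix z :: "'a \<times> real" assume "z \<in> space (M \<Otimes>\<^sub>M lborel)"
  then have "fst z \<in> space M" by (auto simp: space_pair_measure)
  then show "(\<lambda>k. X (of_int \<lfloor>snd z * real (Suc k)\<rfloor> / real (Suc k)) (fst z)) \<longlonglongrightarrow> X (snd z) (fst z)"
    by (intro continuous_on_tendsto_compose[OF cont LIMSEQ_floor_mult_div]) auto
qed

lemma AE_continuous_process_modification:
  fixes X :: "real \<Rightarrow> 'a \<Rightarrow> 'b::real_normed_vector"
  assumes meas: "\<And>r. X r \<in> borel_measurable M"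
    and AE_cont: "AE \<omega> in M. continuous_on S (\<lambda>r. X r \<omega>)"
  obtains Y where "\<And>r. Y r \<in> borel_measurable M" "\<And>\<omega>. \<omega> \<in> space M \<Longrightarrow> continuous_on S (\<lambda>r. Y r \<omega>)"
    "AE \<omega> in M. \<forall>r. Y r \<omega> = X r \<omega>"
proof -
  from AE_cont obtain N where N: "{\<omega> \<in> space M. \<not> continuous_on S (\<lambda>r. X r \<omega>)} \<subseteq> N"
    "emeasure M N = 0" "N \<in> sets M"
    by (rule AE_E)
  show ?thesis
  proof
    show "(\<lambda>\<omega>. if \<omega> \<in> N then 0 else X r \<omega>) \<in> borel_measurable M" for r
      using meas N(3) by measurable
    show "continuous_on S (\<lambda>r. if \<omega> \<in> N then 0 else X r \<omega>)" if "\<omega> \<in> space M" for \<omega>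
      using N(1) that by (cases "\<omega> \<in> N") auto
    show "AE \<omega> in M. \<forall>r. (if \<omega> \<in> N then 0 else X r \<omega>) = X r \<omega>"
      using N(2,3) by (auto intro: AE_I')
  qed
qed

lemma borel_measurable_weighted_increment:
  fixes W :: "real \<Rightarrow> 'a \<Rightarrow> 'b::{real_normed_vector, second_countable_topology}"
  assumes [measurable]: "\<And>r. W r \<in> borel_measurable M"
    and cont: "\<And>\<omega>. \<omega> \<in> space M \<Longrightarrow> continuous_on {0..} (\<lambda>r. W r \<omega>)" and t: "0 \<le> t"
  shows "(\<lambda>(\<omega>, s). ennreal (indicator {0..t} s * (exp ((s - t) / \<epsilon>) / \<epsilon> * norm (W t \<omega> - W s \<omega>) powr p)))
           \<in> borel_measurable (M \<Otimes>\<^sub>M lborel)"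
proof -
  \<comment> \<open>on the support of the indicator, \<open>W s\<close> agrees with the process stopped at \<open>0\<close> and at \<open>t\<close>\<close>
  have [measurable]: "(\<lambda>z. W (max 0 (min t (snd z))) (fst z)) \<in> borel_measurable (M \<Otimes>\<^sub>M lborel)"
  proof (rule borel_measurable_continuous_process[where X="\<lambda>r. W (max 0 (min t r))"])
    show "continuous_on UNIV (\<lambda>r. W (max 0 (min t r)) \<omega>)" if "\<omega> \<in> space M" for \<omega>
      using t by (intro continuous_on_compose2[OF cont[OF that]] continuous_intros) auto
  qed measurable
  define F where
    "F \<omega> s = ennreal (indicator {0..t} s * (exp ((s - t) / \<epsilon>) / \<epsilon> * norm (W t \<omega> - W s \<omega>) powr p))"
    for \<omega> s
  have F_stopped: "F \<omega> s = ennreal (indicator {0..t} s *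
      (exp ((s - t) / \<epsilon>) / \<epsilon> * norm (W t \<omega> - W (max 0 (min t s)) \<omega>) powr p))" for \<omega> s
    unfolding F_def by (cases "s \<in> {0..t}") (auto simp: indicator_def)
  have "case_prod F \<in> borel_measurable (M \<Otimes>\<^sub>M lborel)"
    unfolding F_stopped[abs_def] split_beta' by measurable
  then show ?thesis unfolding F_def[abs_def] .
qed

section \<open>Moment bounds for the velocity\<close>

lemma nn_integral_exp_weighted_increment_le:
  fixes W :: "real \<Rightarrow> 'a \<Rightarrow> 'b::{real_normed_vector, second_countable_topology}"
  assumes [measurable]: "\<And>r. W r \<in> borel_measurable M"
    and moment: "(\<integral>\<^sup>+\<omega>. ennreal (norm (W t \<omega> - W s \<omega>) powr p) \<partial>M) \<le> ennreal (K * (t - s) powr (p / 2))"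
    and K: "0 \<le> K" and st: "s \<le> t" and eps: "0 < \<epsilon>" and p: "0 < p"
  shows "(\<integral>\<^sup>+\<omega>. ennreal (exp ((s - t) / \<epsilon>) / \<epsilon> * norm (W t \<omega> - W s \<omega>) powr p) \<partial>M)
           \<le> ennreal (K * p powr (p / 2) * \<epsilon> powr (p / 2) * (exp ((s - t) / (2 * \<epsilon>)) / \<epsilon>))"
proof -
  define w where "w = exp ((s - t) / \<epsilon>) / \<epsilon>"
  have w: "0 \<le> w" unfolding w_def using eps by simp
  have "(\<integral>\<^sup>+\<omega>. ennreal (w * norm (W t \<omega> - W s \<omega>) powr p) \<partial>M)
      = ennreal w * (\<integral>\<^sup>+\<omega>. ennreal (norm (W t \<omega> - W s \<omega>) powr p) \<partial>M)"
    using w by (simp add: ennreal_mult nn_integral_cmult)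
  also have "\<dots> \<le> ennreal w * ennreal (K * (t - s) powr (p / 2))"
    by (intro mult_left_mono moment) auto
  also have "\<dots> = ennreal (K * (w * (t - s) powr (p / 2)))"
    using w K by (simp add: ennreal_mult[symmetric] mult_ac)
  also have "\<dots> \<le> ennreal (K * p powr (p / 2) * \<epsilon> powr (p / 2) * (exp ((s - t) / (2 * \<epsilon>)) / \<epsilon>))"
    unfolding w_def using st eps p K
    by (intro ennreal_leI order_trans[OF mult_left_mono[OF exp_weight_mult_powr_le]]) (auto simp: mult_ac)
  finally show ?thesis unfolding w_def .
qed

lemma nn_integral_weighted_increment_le:
  fixes W :: "real \<Rightarrow> 'a \<Rightarrow> 'b::{real_normed_vector, second_countable_topology}"
  assumes M: "sigma_finite_measure M"
    and meas[measurable]: "\<And>r. W r \<in> borel_measurable M"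
    and cont: "\<And>\<omega>. \<omega> \<in> space M \<Longrightarrow> continuous_on {0..} (\<lambda>r. W r \<omega>)"
    and moment: "\<And>s. 0 \<le> s \<Longrightarrow> s \<le> t \<Longrightarrow>
       (\<integral>\<^sup>+\<omega>. ennreal (norm (W t \<omega> - W s \<omega>) powr p) \<partial>M) \<le> ennreal (K * (t - s) powr (p / 2))"
    and K: "0 \<le> K" and t: "0 \<le> t" and eps: "0 < \<epsilon>" and p: "0 < p"
  shows "(\<integral>\<^sup>+\<omega>. (\<integral>\<^sup>+s. ennreal (indicator {0..t} s * (exp ((s - t) / \<epsilon>) / \<epsilon> * norm (W t \<omega> - W s \<omega>) powr p)) \<partial>lborel) \<partial>M)
         \<le> ennreal (2 * K * p powr (p / 2) * \<epsilon> powr (p / 2))"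
proof -
  interpret pair_sigma_finite M lborel
    using M by (simp add: pair_sigma_finite_def lborel.sigma_finite_measure_axioms)
  define C where "C = K * p powr (p / 2) * \<epsilon> powr (p / 2)"
  have C: "0 \<le> C" unfolding C_def using K by simp
  have inner: "(\<integral>\<^sup>+\<omega>. ennreal (indicator {0..t} s * (exp ((s - t) / \<epsilon>) / \<epsilon> * norm (W t \<omega> - W s \<omega>) powr p)) \<partial>M)
      \<le> ennreal (indicator {0..t} s * (C * (exp ((s - t) / (2 * \<epsilon>)) / \<epsilon>)))" for s
  proof (cases "s \<in> {0..t}")
    case True
    then have "(\<integral>\<^sup>+\<omega>. ennreal (exp ((s - t) / \<epsilon>) / \<epsilon> * norm (W t \<omega> - W s \<omega>) powr p) \<partial>M)
        \<le> ennreal (C * (exp ((s - t) / (2 * \<epsilon>)) / \<epsilon>))"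
      unfolding C_def using K eps p by (intro nn_integral_exp_weighted_increment_le moment meas) auto
    with True show ?thesis by simp
  qed simp
  have "((\<lambda>s. C * (exp ((s - t) / (2 * \<epsilon>)) / \<epsilon>)) has_integral 2 * C * (1 - exp (- t / (2 * \<epsilon>)))) {0..t}"
    using has_integral_mult_right[OF exp_weight_has_integral[of "2 * \<epsilon>" t], of "2 * C"] eps t
    by (simp add: mult_ac)
  then have weight: "(\<integral>\<^sup>+s. ennreal (indicator {0..t} s * (C * (exp ((s - t) / (2 * \<epsilon>)) / \<epsilon>))) \<partial>lborel)
      = ennreal (2 * C * (1 - exp (- t / (2 * \<epsilon>))))"
    using C eps by (intro nn_integral_has_integral_lebesgue) auto
  have "(\<integral>\<^sup>+\<omega>. (\<integral>\<^sup>+s. ennreal (indicator {0..t} s * (exp ((s - t) / \<epsilon>) / \<epsilon> * norm (W t \<omega> - W s \<omega>) powr p)) \<partial>lborel) \<partial>M)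
      = (\<integral>\<^sup>+s. (\<integral>\<^sup>+\<omega>. ennreal (indicator {0..t} s * (exp ((s - t) / \<epsilon>) / \<epsilon> * norm (W t \<omega> - W s \<omega>) powr p)) \<partial>M) \<partial>lborel)"
    by (rule Fubini'[OF borel_measurable_weighted_increment[OF meas cont t], symmetric])
  also have "\<dots> \<le> (\<integral>\<^sup>+s. ennreal (indicator {0..t} s * (C * (exp ((s - t) / (2 * \<epsilon>)) / \<epsilon>))) \<partial>lborel)"
    by (intro nn_integral_mono inner)
  also have "\<dots> \<le> ennreal (2 * C)"
    unfolding weight using C by (intro ennreal_leI) (simp add: mult_left_le)
  finally show ?thesis unfolding C_def by (simp add: mult_ac)
qed

lemma nn_integral_damped_endpoint_le:
  fixes W :: "real \<Rightarrow> 'a \<Rightarrow> 'b::{real_normed_vector, second_countable_topology}"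
  assumes [measurable]: "\<And>r. W r \<in> borel_measurable M" and W0: "AE \<omega> in M. W 0 \<omega> = 0"
    and moment: "(\<integral>\<^sup>+\<omega>. ennreal (norm (W t \<omega> - W 0 \<omega>) powr p) \<partial>M) \<le> ennreal (K * t powr (p / 2))"
    and K: "0 \<le> K" and t: "0 \<le> t" and eps: "0 < \<epsilon>" and p: "1 \<le> p"
  shows "(\<integral>\<^sup>+\<omega>. ennreal ((sqrt (2 / \<epsilon>) * exp (- t / \<epsilon>) * norm (W t \<omega>)) powr p) \<partial>M)
          \<le> ennreal (2 powr (p / 2) * K * p powr (p / 2))"
proof -
  let ?c = "sqrt (2 / \<epsilon>)" and ?E = "exp (- t / \<epsilon>)"
  have E: "0 < ?E" "?E \<le> 1" using t eps by auto
  have "?E * t powr (p / 2) \<le> p powr (p / 2) * \<epsilon> powr (p / 2) * exp ((0 - t) / (2 * \<epsilon>))"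
    using exp_weight_mult_powr_le[of \<epsilon> 0 t p] eps t p by (simp add: field_simps)
  also have "\<dots> \<le> p powr (p / 2) * \<epsilon> powr (p / 2)"
    using t eps by (intro mult_left_le) auto
  finally have Et: "?E * t powr (p / 2) \<le> p powr (p / 2) * \<epsilon> powr (p / 2)" .
  have "(?c * ?E) powr p * (K * t powr (p / 2)) = K * (?c powr p * (?E powr p * t powr (p / 2)))"
    using E by (simp add: powr_mult mult_ac)
  also have "\<dots> \<le> K * (?c powr p * (p powr (p / 2) * \<epsilon> powr (p / 2)))"
    using E p Et K
    by (intro mult_left_mono order_trans[OF mult_right_mono[OF powr_le_one_le]]) auto
  also have "\<dots> = 2 powr (p / 2) * K * p powr (p / 2)"
    using sqrt_two_div_powr_mult_powr[OF eps, of p] by (simp add: mult_ac)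
  finally have const: "(?c * ?E) powr p * (K * t powr (p / 2)) \<le> 2 powr (p / 2) * K * p powr (p / 2)" .
  have "(\<integral>\<^sup>+\<omega>. ennreal ((?c * ?E * norm (W t \<omega>)) powr p) \<partial>M)
      = (\<integral>\<^sup>+\<omega>. ennreal ((?c * ?E) powr p) * ennreal (norm (W t \<omega> - W 0 \<omega>) powr p) \<partial>M)"
    using W0 E by (intro nn_integral_cong_AE) (auto simp: powr_mult ennreal_mult)
  also have "\<dots> = ennreal ((?c * ?E) powr p) * (\<integral>\<^sup>+\<omega>. ennreal (norm (W t \<omega> - W 0 \<omega>) powr p) \<partial>M)"
    by (rule nn_integral_cmult) measurable
  also have "\<dots> \<le> ennreal ((?c * ?E) powr p) * ennreal (K * t powr (p / 2))"
    by (intro mult_left_mono moment) auto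
  also have "\<dots> \<le> ennreal (2 powr (p / 2) * K * p powr (p / 2))"
    using K const by (simp add: ennreal_mult[symmetric])
  finally show ?thesis .
qed

lemma nn_integral_norm_powr_le_shifted:
  fixes Y :: "'a \<Rightarrow> 'b::{real_normed_vector, second_countable_topology}"
  assumes "prob_space M" and [measurable]: "Y \<in> borel_measurable M"
    and y: "norm y \<le> B" and p: "0 < p"
    and m: "(\<integral>\<^sup>+\<omega>. ennreal (norm (Y \<omega> - y) powr p) \<partial>M) = ennreal m"
  shows "(\<integral>\<^sup>+\<omega>. ennreal (norm (Y \<omega>) powr p) \<partial>M) \<le> ennreal (2 powr p * (max m 0 + B powr p))"
proof -
  interpret prob_space M by fact
  have B: "0 \<le> B" using y by (auto intro: order_trans[OF norm_ge_zero])
  have "ennreal (norm (Y \<omega>) powr p) \<le> ennreal (2 powr p) * (ennreal (norm (Y \<omega> - y) powr p) + ennreal (B powr p))"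
    for \<omega>
  proof -
    have "norm (Y \<omega>) powr p \<le> (norm (Y \<omega> - y) + B) powr p"
      using norm_triangle_sub[of "Y \<omega>" y] y p by (intro powr_mono2) auto
    also have "\<dots> \<le> 2 powr p * (norm (Y \<omega> - y) powr p + B powr p)"
      using B p by (intro powr_add_le) auto
    finally have "ennreal (norm (Y \<omega>) powr p) \<le> ennreal (2 powr p * (norm (Y \<omega> - y) powr p + B powr p))"
      by (rule ennreal_leI)
    then show ?thesis by (simp add: ennreal_mult ennreal_plus)
  qed
  then have "(\<integral>\<^sup>+\<omega>. ennreal (norm (Y \<omega>) powr p) \<partial>M)
      \<le> (\<integral>\<^sup>+\<omega>. ennreal (2 powr p) * (ennreal (norm (Y \<omega> - y) powr p) + ennreal (B powr p)) \<partial>M)"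
    by (intro nn_integral_mono)
  also have "\<dots> = ennreal (2 powr p) * (\<integral>\<^sup>+\<omega>. ennreal (norm (Y \<omega> - y) powr p) + ennreal (B powr p) \<partial>M)"
    by (rule nn_integral_cmult) measurable
  also have "\<dots> = ennreal (2 powr p) * (ennreal m + ennreal (B powr p))"
  proof -
    have "(\<lambda>\<omega>. norm (Y \<omega> - y) powr p) \<in> borel_measurable M" by measurable
    then show ?thesis by (subst nn_integral_add) (auto simp: m emeasure_space_1)
  qed
  also have "\<dots> \<le> ennreal (2 powr p) * (ennreal (max m 0) + ennreal (B powr p))"
    by (intro mult_left_mono add_right_mono ennreal_leI) auto
  also have "\<dots> = ennreal (2 powr p * (max m 0 + B powr p))"
    by (simp add: ennreal_mult ennreal_plus)
  finally show ?thesis .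
qed

lemma langevin_solution_AE_velocity_powr_le:
  fixes b :: "real^'n \<Rightarrow> real \<Rightarrow> real^'n" and W X V :: "real \<Rightarrow> 'a \<Rightarrow> real^'n"
  assumes bound: "\<And>x t. 0 \<le> t \<Longrightarrow> norm (b x t) \<le> B"
    and cont_b: "continuous_on (UNIV \<times> {0..}) (\<lambda>z. b (fst z) (snd z))"
    and p: "1 < p" and eps: "0 < \<epsilon>" and t: "0 \<le> t"
    and W: "AE \<omega> in M. W 0 \<omega> = 0 \<and> continuous_on {0..} (\<lambda>r. W r \<omega>)"
    and sol: "langevin_solution M \<epsilon> b x W X V"
  shows "AE \<omega> in M. ennreal (norm (V t \<omega>) powr p) \<le> ennreal (4 powr p) *
           (ennreal (norm (V 0 \<omega>) powr p) + ennreal (B powr p)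
            + ennreal ((sqrt (2 / \<epsilon>) * exp (- t / \<epsilon>) * norm (W t \<omega>)) powr p)
            + ennreal (sqrt (2 / \<epsilon>) powr p) *
              (\<integral>\<^sup>+s. ennreal (indicator {0..t} s * (exp ((s - t) / \<epsilon>) / \<epsilon> * norm (W t \<omega> - W s \<omega>) powr p)) \<partial>lborel))"
proof -
  have "AE \<omega> in M. continuous_on {0..} (\<lambda>r. V r \<omega>) \<and>
      (\<forall>r\<ge>0. X r \<omega> = x + integral {0..r} (\<lambda>s. V s \<omega>) \<and>
         V r \<omega> = V 0 \<omega> + integral {0..r} (\<lambda>s. (1 / \<epsilon>) *\<^sub>R (b (X s \<omega>) s - V s \<omega>))
           + sqrt (2 / \<epsilon>) *\<^sub>R W r \<omega>)"
    using sol unfolding langevin_solution_def by blast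
  with W show ?thesis
  proof eventually_elim
  case (elim \<omega>)
  have paths: "continuous_on {0..} (\<lambda>r. V r \<omega>)" "continuous_on {0..} (\<lambda>r. W r \<omega>)" "W 0 \<omega> = 0"
    using elim by blast+
  let ?c = "sqrt (2 / \<epsilon>)" and ?f = "\<lambda>s. exp ((s - t) / \<epsilon>) / \<epsilon> * norm (W t \<omega> - W s \<omega>) powr p"
  have "continuous_on {0..t} (\<lambda>r. W r \<omega>)"
    using paths(2) by (rule continuous_on_subset) auto
  then have "continuous_on {0..t} (\<lambda>s. norm (W t \<omega> - W s \<omega>) powr p)"
    using p by (intro continuous_on_powr' continuous_intros) auto
  moreover have "continuous_on {0..t} (\<lambda>s. exp ((s - t) / \<epsilon>) / \<epsilon>)"
    using eps by (intro continuous_intros) auto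
  ultimately have "continuous_on {0..t} ?f"
    by (rule continuous_on_mult[rotated])
  then have nn_integral: "(\<integral>\<^sup>+s. ennreal (indicator {0..t} s * ?f s) \<partial>lborel) = ennreal (integral {0..t} ?f)"
    using eps by (intro nn_integral_has_integral_lebesgue integrable_integral integrable_continuous_interval) auto
  have "norm (V t \<omega>) powr p \<le> 4 powr p * (norm (V 0 \<omega>) powr p + B powr p
      + (?c * exp (- t / \<epsilon>) * norm (W t \<omega>)) powr p + ?c powr p * integral {0..t} ?f)"
  proof (rule langevin_path_velocity_powr_le[OF eps t _ p bound cont_b])
    show "X r \<omega> = x + integral {0..r} (\<lambda>s. V s \<omega>)" "V r \<omega> = V 0 \<omega> +
        integral {0..r} (\<lambda>s. (1 / \<epsilon>) *\<^sub>R (b (X s \<omega>) s - V s \<omega>)) + ?c *\<^sub>R W r \<omega>" if "0 \<le> r" for r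
      using elim that by blast+
  qed (use paths eps in auto)
  then have ineq: "ennreal (norm (V t \<omega>) powr p) \<le> ennreal (4 powr p * (norm (V 0 \<omega>) powr p + B powr p
      + (?c * exp (- t / \<epsilon>) * norm (W t \<omega>)) powr p + ?c powr p * integral {0..t} ?f))"
    by (rule ennreal_leI)
  have J: "0 \<le> integral {0..t} ?f"
    using \<open>continuous_on {0..t} ?f\<close> eps by (intro integral_nonneg integrable_continuous_interval) auto
  have expand: "ennreal (k * (a1 + a2 + a3 + d * J))
      = ennreal k * (ennreal a1 + ennreal a2 + ennreal a3 + ennreal d * ennreal J)"
    if "0 \<le> k" "0 \<le> a1" "0 \<le> a2" "0 \<le> a3" "0 \<le> d" "0 \<le> J" for k a1 a2 a3 d J :: real
    using that by (simp add: ennreal_mult ennreal_plus)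
  show ?case
    using ineq unfolding nn_integral expand[OF powr_ge_zero powr_ge_zero powr_ge_zero powr_ge_zero powr_ge_zero J] .
  qed
qed

lemma nn_integral_langevin_velocity_powr_le:
  fixes b :: "real^'n \<Rightarrow> real \<Rightarrow> real^'n" and M :: "'a measure" and W W' X V :: "real \<Rightarrow> 'a \<Rightarrow> real^'n"
  assumes bound: "\<And>x t. 0 \<le> t \<Longrightarrow> norm (b x t) \<le> B"
    and cont_b: "continuous_on (UNIV \<times> {0..}) (\<lambda>z. b (fst z) (snd z))"
    and p: "1 < p" and eps: "0 < \<epsilon>" and t: "0 \<le> t" and "prob_space M"
    and W: "AE \<omega> in M. W 0 \<omega> = 0 \<and> continuous_on {0..} (\<lambda>r. W r \<omega>)"
    and sol: "langevin_solution M \<epsilon> b x W X V"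
    and meas'[measurable]: "\<And>r. W' r \<in> borel_measurable M"
    and cont': "\<And>\<omega>. \<omega> \<in> space M \<Longrightarrow> continuous_on {0..} (\<lambda>r. W' r \<omega>)"
    and W': "AE \<omega> in M. \<forall>r. W' r \<omega> = W r \<omega>"
  shows "(\<integral>\<^sup>+\<omega>. ennreal (norm (V t \<omega>) powr p) \<partial>M)
    \<le> ennreal (4 powr p) * ((\<integral>\<^sup>+\<omega>. ennreal (norm (V 0 \<omega>) powr p) \<partial>M) + ennreal (B powr p)
        + (\<integral>\<^sup>+\<omega>. ennreal ((sqrt (2 / \<epsilon>) * exp (- t / \<epsilon>) * norm (W' t \<omega>)) powr p) \<partial>M)
        + ennreal (sqrt (2 / \<epsilon>) powr p) * (\<integral>\<^sup>+\<omega>. (\<integral>\<^sup>+s. ennreal (indicator {0..t} s *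
            (exp ((s - t) / \<epsilon>) / \<epsilon> * norm (W' t \<omega> - W' s \<omega>) powr p)) \<partial>lborel) \<partial>M))"
proof -
  interpret prob_space M by fact
  let ?c = "sqrt (2 / \<epsilon>)"
  define A where "A \<omega> = ennreal ((?c * exp (- t / \<epsilon>) * norm (W' t \<omega>)) powr p)" for \<omega>
  define J where "J \<omega> = (\<integral>\<^sup>+s. ennreal (indicator {0..t} s *
      (exp ((s - t) / \<epsilon>) / \<epsilon> * norm (W' t \<omega> - W' s \<omega>) powr p)) \<partial>lborel)" for \<omega>
  have [measurable]: "\<And>r. V r \<in> borel_measurable M"
    using sol unfolding langevin_solution_def by blast
  have [measurable]: "A \<in> borel_measurable M" unfolding A_def by measurable
  have [measurable]: "J \<in> borel_measurable M"
    unfolding J_def by (rule lborel.borel_measurable_nn_integral[OF borel_measurable_weighted_increment[OF meas' cont' t]])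
  have "AE \<omega> in M. ennreal (norm (V t \<omega>) powr p) \<le> ennreal (4 powr p) *
      (ennreal (norm (V 0 \<omega>) powr p) + ennreal (B powr p)
       + ennreal ((?c * exp (- t / \<epsilon>) * norm (W t \<omega>)) powr p)
       + ennreal (?c powr p) *
         (\<integral>\<^sup>+s. ennreal (indicator {0..t} s * (exp ((s - t) / \<epsilon>) / \<epsilon> * norm (W t \<omega> - W s \<omega>) powr p)) \<partial>lborel))"
    by (rule langevin_solution_AE_velocity_powr_le[OF _ cont_b p eps t W sol]) (rule bound)
  with W' have "AE \<omega> in M. ennreal (norm (V t \<omega>) powr p)
      \<le> ennreal (4 powr p) * (ennreal (norm (V 0 \<omega>) powr p) + ennreal (B powr p) + A \<omega> + ennreal (?c powr p) * J \<omega>)"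
    unfolding A_def J_def by eventually_elim simp
  then show ?thesis
    unfolding A_def[symmetric] J_def[symmetric]
    by (auto dest!: nn_integral_mono_AE simp: nn_integral_cmult nn_integral_add emeasure_space_1)
qed

lemma langevin_velocity_moment_le:
  fixes b :: "real^'n \<Rightarrow> real \<Rightarrow> real^'n" and M :: "'a measure" and W X V :: "real \<Rightarrow> 'a \<Rightarrow> real^'n"
  assumes bound: "\<And>x t. 0 \<le> t \<Longrightarrow> norm (b x t) \<le> B"
    and cont_b: "continuous_on (UNIV \<times> {0..}) (\<lambda>z. b (fst z) (snd z))"
    and p: "1 < p" and eps: "0 < \<epsilon>" and t: "0 \<le> t"
    and BM: "std_BM M W"
    and moment: "\<And>s t. 0 \<le> s \<Longrightarrow> s \<le> t \<Longrightarrow>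
       (\<integral>\<^sup>+\<omega>. ennreal (norm (W t \<omega> - W s \<omega>) powr p) \<partial>M) \<le> ennreal (K * (t - s) powr (p / 2))"
    and K: "0 \<le> K"
    and sol: "langevin_solution M \<epsilon> b x W X V"
    and m: "(\<integral>\<^sup>+\<omega>. ennreal (norm (V 0 \<omega> - b x 0) powr p) \<partial>M) = ennreal m"
  shows "(\<integral>\<^sup>+\<omega>. ennreal (norm (V t \<omega>) powr p) \<partial>M)
    \<le> ennreal (4 powr p * (2 powr p * (max m 0 + B powr p) + B powr p + 3 * (2 powr (p / 2) * K * p powr (p / 2))))"
proof -
  let ?c = "sqrt (2 / \<epsilon>)"
  define Q where "Q = 2 powr (p / 2) * K * p powr (p / 2)"
  have Q: "0 \<le> Q" unfolding Q_def using K by simp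
  interpret prob_space M using BM unfolding std_BM_def by blast
  have [measurable]: "\<And>r. W r \<in> borel_measurable M" "\<And>r. V r \<in> borel_measurable M"
    using BM sol unfolding std_BM_def langevin_solution_def by blast+
  have W: "AE \<omega> in M. W 0 \<omega> = 0 \<and> continuous_on {0..} (\<lambda>r. W r \<omega>)"
    using BM unfolding std_BM_def by blast
  \<comment> \<open>Fubini needs paths that are continuous everywhere, not just almost surely\<close>
  obtain W' where meas': "\<And>r. W' r \<in> borel_measurable M"
    and cont': "\<And>\<omega>. \<omega> \<in> space M \<Longrightarrow> continuous_on {0..} (\<lambda>r. W' r \<omega>)"
    and W': "AE \<omega> in M. \<forall>r. W' r \<omega> = W r \<omega>"
    using AE_continuous_process_modification[of W M "{0..}"] W by auto
  have moment': "(\<integral>\<^sup>+\<omega>. ennreal (norm (W' t \<omega> - W' s \<omega>) powr p) \<partial>M) \<le> ennreal (K * (t - s) powr (p / 2))"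
    if "0 \<le> s" "s \<le> t" for s
    using moment[OF that] W' by (subst nn_integral_cong_AE) auto
  have "(\<integral>\<^sup>+\<omega>. ennreal (norm (V t \<omega>) powr p) \<partial>M)
    \<le> ennreal (4 powr p) * ((\<integral>\<^sup>+\<omega>. ennreal (norm (V 0 \<omega>) powr p) \<partial>M) + ennreal (B powr p)
        + (\<integral>\<^sup>+\<omega>. ennreal ((?c * exp (- t / \<epsilon>) * norm (W' t \<omega>)) powr p) \<partial>M)
        + ennreal (?c powr p) * (\<integral>\<^sup>+\<omega>. (\<integral>\<^sup>+s. ennreal (indicator {0..t} s *
            (exp ((s - t) / \<epsilon>) / \<epsilon> * norm (W' t \<omega> - W' s \<omega>) powr p)) \<partial>lborel) \<partial>M))"
    by (rule nn_integral_langevin_velocity_powr_le[OF _ cont_b p eps t prob_space_axioms W sol meas' cont' W'])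
      (rule bound)
  also have "\<dots> \<le> ennreal (4 powr p) * (ennreal (2 powr p * (max m 0 + B powr p)) + ennreal (B powr p)
          + ennreal Q + ennreal (?c powr p) * ennreal (2 * K * p powr (p / 2) * \<epsilon> powr (p / 2)))"
  proof (intro mult_left_mono add_mono order_refl)
    show "(\<integral>\<^sup>+\<omega>. ennreal (norm (V 0 \<omega>) powr p) \<partial>M) \<le> ennreal (2 powr p * (max m 0 + B powr p))"
      using bound[of 0 x] p m by (intro nn_integral_norm_powr_le_shifted prob_space_axioms) auto
    show "(\<integral>\<^sup>+\<omega>. ennreal ((?c * exp (- t / \<epsilon>) * norm (W' t \<omega>)) powr p) \<partial>M) \<le> ennreal Q"
      unfolding Q_def using W W' moment'[of 0] K t eps p meas'
      by (intro nn_integral_damped_endpoint_le) (auto elim: AE_mp)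
    show "(\<integral>\<^sup>+\<omega>. (\<integral>\<^sup>+s. ennreal (indicator {0..t} s *
            (exp ((s - t) / \<epsilon>) / \<epsilon> * norm (W' t \<omega> - W' s \<omega>) powr p)) \<partial>lborel) \<partial>M)
        \<le> ennreal (2 * K * p powr (p / 2) * \<epsilon> powr (p / 2))"
      using K t eps p
      by (intro nn_integral_weighted_increment_le[OF _ meas' cont' moment'] sigma_finite_measure_axioms) auto
  qed auto
  also have "\<dots> = ennreal (4 powr p * (2 powr p * (max m 0 + B powr p) + B powr p + 3 * Q))"
  proof -
    have "?c powr p * (2 * K * p powr (p / 2) * \<epsilon> powr (p / 2)) = 2 * Q"
      using sqrt_two_div_powr_mult_powr[OF eps, of p] unfolding Q_def by (simp add: mult_ac)
    then show ?thesis
      using K Q by (simp add: ennreal_mult[symmetric] ennreal_plus[symmetric] del: ennreal_plus)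
  qed
  finally show ?thesis unfolding Q_def .
qed

theorem lemma3p6:
  fixes b :: "real^'n \<Rightarrow> real \<Rightarrow> real^'n" and p :: real and m :: real
  assumes "smooth_bounded b" and "periodic_drift b" and "p \<ge> 4"
  shows "\<exists>C>0. \<forall>(M :: 'a measure) W X V \<epsilon> x.
           \<epsilon> > 0 \<and> std_BM M W \<and> indep_of_BM M W (V 0) \<and>
           langevin_solution M \<epsilon> b x W X V \<and>
           integrable M (\<lambda>\<omega>. V 0 \<omega> - b x 0) \<and>
           (\<integral>\<omega>. (V 0 \<omega> - b x 0) \<partial>M) = 0 \<and>
           (\<integral>\<^sup>+\<omega>. ennreal (norm (V 0 \<omega> - b x 0) powr p) \<partial>M) = ennreal m
           \<longrightarrow> (\<forall>t\<ge>0. (\<integral>\<^sup>+\<omega>. ennreal (norm (V t \<omega>) powr p) \<partial>M) \<le> ennreal C)"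
proof -
  obtain B where "0 \<le> B" and bound: "\<And>x t. 0 \<le> t \<Longrightarrow> norm (b x t) \<le> B"
    using smooth_bounded_imp_bounded[OF assms(1)] by blast
  have p: "1 < p" using assms(3) by simp
  obtain K :: real where "0 < K" and moment: "\<And>(M :: 'a measure) (W :: real \<Rightarrow> 'a \<Rightarrow> real^'n) s t.
      std_BM M W \<Longrightarrow> 0 \<le> s \<Longrightarrow> s \<le> t \<Longrightarrow>
      (\<integral>\<^sup>+\<omega>. ennreal (norm (W t \<omega> - W s \<omega>) powr p) \<partial>M) \<le> ennreal (K * (t - s) powr (p / 2))"
    using std_BM_increment_moment[of p] p by auto
  define C where "C = 4 powr p * (2 powr p * (max m 0 + B powr p) + B powr p + 3 * (2 powr (p / 2) * K * p powr (p / 2)))"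
  have "0 < C"
    unfolding C_def using \<open>0 < K\<close> p by (intro mult_pos_pos add_nonneg_pos) auto
  moreover have "(\<integral>\<^sup>+\<omega>. ennreal (norm (V t \<omega>) powr p) \<partial>M) \<le> ennreal C"
    if "0 < \<epsilon>" "std_BM M W" "langevin_solution M \<epsilon> b x W X V"
      "(\<integral>\<^sup>+\<omega>. ennreal (norm (V 0 \<omega> - b x 0) powr p) \<partial>M) = ennreal m" "0 \<le> t"
    for M :: "'a measure" and W X V \<epsilon> x t
    unfolding C_def using that \<open>0 < K\<close>
    by (intro langevin_velocity_moment_le[OF _ smooth_bounded_imp_continuous[OF assms(1)] p] bound)
      (auto intro: moment)
  ultimately show ?thesis by blast
qed

end
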